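(* Let $m>1$ and let $B(X,Y)=\tfrac12\mathrm{tr}(XY)$ on $\mathfrak{su}(m,m-1)$. This is a multiple of the Killing form and defines a bi-invariant metric of neutral signature on $SU(m,m-1)$. There is a left-invariant hyper-paracomplex structure $(J_1,J_2,J_3)$ on $SU(m,m-1)$ for which $B$ is hyperparahermitian, such that the following holds. The left-invariant connection $\nabla$ for which all left-invariant vector fields are parallel is an HPKT connection. It is flat, and its torsion 3-form $T^\nabla(X,Y,Z)=-B([X,Y],Z)$ is closed. Consequently, for every cocompact lattice $\Gamma\subset SU(m,m-1)$, the compact manifold $SU(m,m-1)/\Gamma$ carries an invariant, flat, strong HPKT structure whose neutral metric is induced by the Killing form.
   Context: An almost hyper-paracomplex structure on a manifold is a triple $(J_1,J_2,J_3)$ of endomorphisms of the tangent bundle with $J_1^2=J_2^2=\mathrm{id}$, $J_3^2=-\mathrm{id}$ and $J_1J_2=-J_2J_1=J_3$. It is hyper-paracomplex if each $J_a$ has vanishing Nijenhuis tensor. A metric $g$ is hyperparahermitian if $g(J_1X,J_1Y)=g(J_2X,J_2Y)=-g(J_3X,J_3Y)=-g(X,Y)$. An HPKT connection is a linear connection $\nabla$ with $\nabla g=\nabla J_a=0$ ($a=1,2,3$) and totally skew-symmetric torsion, i.e. $T^\nabla(X,Y,Z):=g(T^\nabla(X,Y),Z)$ is a 3-form. The HPKT structure is strong if $dT^\nabla=0$, and flat if $\nabla$ has zero curvature. "Invariant" on $G/\Gamma$ means induced by left-invariant structures on $G$, where $\Gamma$ acts by left translations. *)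

theory Defs
  imports Complex_Main "HOL-Library.Function_Algebras"
begin

text \<open>Complex matrices of size n x n are encoded as functions nat => nat => complex
  whose entries vanish outside the index range {0..<n}. Pointwise +, -, 0 come from
  Function_Algebras.\<close>

type_synonym cmat = "nat \<Rightarrow> nat \<Rightarrow> complex"

definition mmul :: "nat \<Rightarrow> cmat \<Rightarrow> cmat \<Rightarrow> cmat" where
  "mmul n A B = (\<lambda>i j. \<Sum>k<n. A i k * B k j)"

definition mtrace :: "nat \<Rightarrow> cmat \<Rightarrow> complex" where
  "mtrace n A = (\<Sum>i<n. A i i)"

definition madj :: "cmat \<Rightarrow> cmat" where
  "madj A = (\<lambda>i j. cnj (A j i))"

definition msc :: "real \<Rightarrow> cmat \<Rightarrow> cmat" where
  "msc a A = (\<lambda>i j. complex_of_real a * A i j)"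

definition Ipq :: "nat \<Rightarrow> nat \<Rightarrow> cmat" where
  "Ipq p q = (\<lambda>i j. if i = j \<and> i < p then 1 else if i = j \<and> i < p + q then -1 else 0)"

definition su_pq :: "nat \<Rightarrow> nat \<Rightarrow> cmat set" where
  "su_pq p q = {X. (\<forall>i j. (p + q \<le> i \<or> p + q \<le> j) \<longrightarrow> X i j = 0)
      \<and> mtrace (p + q) X = 0
      \<and> mmul (p + q) (madj X) (Ipq p q) + mmul (p + q) (Ipq p q) X = 0}"

text \<open>Lie bracket of left-invariant vector fields = matrix commutator.\<close>
definition brk :: "nat \<Rightarrow> cmat \<Rightarrow> cmat \<Rightarrow> cmat" where
  "brk n X Y = mmul n X Y - mmul n Y X"

definition Bform :: "nat \<Rightarrow> cmat \<Rightarrow> cmat \<Rightarrow> complex" where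
  "Bform n X Y = mtrace n (mmul n X Y) / 2"

text \<open>Left-invariant endomorphisms of TG = real-linear endomorphisms of the Lie algebra L.\<close>
definition lin_endo :: "cmat set \<Rightarrow> (cmat \<Rightarrow> cmat) \<Rightarrow> bool" where
  "lin_endo L J \<longleftrightarrow> (\<forall>X\<in>L. J X \<in> L) \<and>
     (\<forall>X\<in>L. \<forall>Y\<in>L. \<forall>a::real. J (msc a X + Y) = msc a (J X) + J Y)"

definition nijenhuis :: "nat \<Rightarrow> (cmat \<Rightarrow> cmat) \<Rightarrow> cmat \<Rightarrow> cmat \<Rightarrow> cmat" where
  "nijenhuis n J X Y = brk n (J X) (J Y) - J (brk n (J X) Y) - J (brk n X (J Y))
      + J (J (brk n X Y))"

definition almost_hyper_paracomplex ::
  "cmat set \<Rightarrow> (cmat \<Rightarrow> cmat) \<Rightarrow> (cmat \<Rightarrow> cmat) \<Rightarrow> (cmat \<Rightarrow> cmat) \<Rightarrow> bool" where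
  "almost_hyper_paracomplex L J1 J2 J3 \<longleftrightarrow>
     lin_endo L J1 \<and> lin_endo L J2 \<and> lin_endo L J3 \<and>
     (\<forall>X\<in>L. J1 (J1 X) = X \<and> J2 (J2 X) = X \<and> J3 (J3 X) = - X \<and>
              J1 (J2 X) = J3 X \<and> J2 (J1 X) = - J3 X)"

definition hyper_paracomplex ::
  "nat \<Rightarrow> cmat set \<Rightarrow> (cmat \<Rightarrow> cmat) \<Rightarrow> (cmat \<Rightarrow> cmat) \<Rightarrow> (cmat \<Rightarrow> cmat) \<Rightarrow> bool" where
  "hyper_paracomplex n L J1 J2 J3 \<longleftrightarrow> almost_hyper_paracomplex L J1 J2 J3 \<and>
     (\<forall>J\<in>{J1, J2, J3}. \<forall>X\<in>L. \<forall>Y\<in>L. nijenhuis n J X Y = 0)"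

definition hyperparahermitian ::
  "cmat set \<Rightarrow> (cmat \<Rightarrow> cmat \<Rightarrow> complex) \<Rightarrow> (cmat \<Rightarrow> cmat) \<Rightarrow> (cmat \<Rightarrow> cmat) \<Rightarrow> (cmat \<Rightarrow> cmat) \<Rightarrow> bool" where
  "hyperparahermitian L g J1 J2 J3 \<longleftrightarrow>
     (\<forall>X\<in>L. \<forall>Y\<in>L. g (J1 X) (J1 Y) = - g X Y \<and> g (J2 X) (J2 Y) = - g X Y
                    \<and> - g (J3 X) (J3 Y) = - g X Y)"

text \<open>A left-invariant connection is determined by Nab X Y = nabla_X Y for
  left-invariant X, Y. Torsion, curvature, covariant derivatives of g and J, all on
  left-invariant fields (on which g(Y,Z) is constant).\<close>
definition torsion :: "nat \<Rightarrow> (cmat \<Rightarrow> cmat \<Rightarrow> cmat) \<Rightarrow> cmat \<Rightarrow> cmat \<Rightarrow> cmat" where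
  "torsion n Nab X Y = Nab X Y - Nab Y X - brk n X Y"

definition curvature :: "nat \<Rightarrow> (cmat \<Rightarrow> cmat \<Rightarrow> cmat) \<Rightarrow> cmat \<Rightarrow> cmat \<Rightarrow> cmat \<Rightarrow> cmat" where
  "curvature n Nab X Y Z = Nab X (Nab Y Z) - Nab Y (Nab X Z) - Nab (brk n X Y) Z"

definition torsion3 ::
  "nat \<Rightarrow> (cmat \<Rightarrow> cmat \<Rightarrow> complex) \<Rightarrow> (cmat \<Rightarrow> cmat \<Rightarrow> cmat) \<Rightarrow> cmat \<Rightarrow> cmat \<Rightarrow> cmat \<Rightarrow> complex" where
  "torsion3 n g Nab X Y Z = g (torsion n Nab X Y) Z"

text \<open>Exterior derivative of a left-invariant 3-form, evaluated on left-invariant fields.\<close>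
definition d3 :: "nat \<Rightarrow> (cmat \<Rightarrow> cmat \<Rightarrow> cmat \<Rightarrow> complex) \<Rightarrow> cmat \<Rightarrow> cmat \<Rightarrow> cmat \<Rightarrow> cmat \<Rightarrow> complex" where
  "d3 n w X0 X1 X2 X3 =
     - w (brk n X0 X1) X2 X3 + w (brk n X0 X2) X1 X3 - w (brk n X0 X3) X1 X2
     - w (brk n X1 X2) X0 X3 + w (brk n X1 X3) X0 X2 - w (brk n X2 X3) X0 X1"

definition HPKT_connection ::
  "nat \<Rightarrow> cmat set \<Rightarrow> (cmat \<Rightarrow> cmat \<Rightarrow> complex) \<Rightarrow> (cmat \<Rightarrow> cmat) \<Rightarrow> (cmat \<Rightarrow> cmat) \<Rightarrow> (cmat \<Rightarrow> cmat)
     \<Rightarrow> (cmat \<Rightarrow> cmat \<Rightarrow> cmat) \<Rightarrow> bool" where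
  "HPKT_connection n L g J1 J2 J3 Nab \<longleftrightarrow>
     (\<forall>X\<in>L. \<forall>Y\<in>L. Nab X Y \<in> L) \<and>
     (\<forall>X\<in>L. \<forall>Y\<in>L. \<forall>Z\<in>L. g (Nab X Y) Z + g Y (Nab X Z) = 0) \<and>
     (\<forall>J\<in>{J1, J2, J3}. \<forall>X\<in>L. \<forall>Y\<in>L. Nab X (J Y) - J (Nab X Y) = 0) \<and>
     (\<forall>X\<in>L. \<forall>Y\<in>L. \<forall>Z\<in>L.
        torsion3 n g Nab X Y Z = - torsion3 n g Nab Y X Z \<and>
        torsion3 n g Nab X Y Z = - torsion3 n g Nab X Z Y)"

definition flat_conn :: "nat \<Rightarrow> cmat set \<Rightarrow> (cmat \<Rightarrow> cmat \<Rightarrow> cmat) \<Rightarrow> bool" where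
  "flat_conn n L Nab \<longleftrightarrow> (\<forall>X\<in>L. \<forall>Y\<in>L. \<forall>Z\<in>L. curvature n Nab X Y Z = 0)"

end

(*
  The connection for which all left-invariant vector fields are parallel is flat, preserves every
  left-invariant tensor, and has torsion -[X,Y]; for the ad-invariant trace form B the torsion form
  -B([X,Y],Z) is skew-symmetric and, by the Jacobi identity, closed. It therefore suffices to find a
  hyper-paracomplex structure on su(k+1,k) for which B is hyperparahermitian.

  Conjugating by a real orthogonal matrix turns su(k+1,k) into the trace-free matrices that are skew for
  the antidiagonal hermitian form. There J1 is +1 on strictly upper and -1 on strictly lower triangular
  matrices and a sheared swap of coordinates on the diagonal; its eigenspaces are subalgebras, so it is
  integrable. J2 is the conjugate of J1 by a unitary rotation commuting with the form, hence again
  integrable and anti-isometric, and an entrywise computation shows J1 J2 = - J2 J1. Integrability of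
  J3 = J1 J2 then follows from an identity expressing its Nijenhuis tensor through those of J1 and J2.
*)
theory Submission
  imports Defs
begin

section \<open>Matrix algebra\<close>

definition msupp :: "nat \<Rightarrow> cmat \<Rightarrow> bool" where
  "msupp n X \<longleftrightarrow> (\<forall>i j. (n \<le> i \<or> n \<le> j) \<longrightarrow> X i j = 0)"

definition mid :: "nat \<Rightarrow> cmat" where
  "mid n = (\<lambda>i j. if i = j \<and> i < n then 1 else 0)"

definition su_form :: "nat \<Rightarrow> cmat \<Rightarrow> cmat set" where
  "su_form n S = {X. msupp n X \<and> mtrace n X = 0 \<and> mmul n (madj X) S + mmul n S X = 0}"

lemma su_pq_eq_su_form: "su_pq p q = su_form (p + q) (Ipq p q)"
  unfolding su_pq_def su_form_def msupp_def by simp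

lemma cmat_eqI: "(\<And>i j. (X::cmat) i j = Y i j) \<Longrightarrow> X = Y"
  by (intro ext)

lemma sum_single:
  fixes f :: "nat \<Rightarrow> complex"
  assumes "\<And>l. l \<noteq> a \<Longrightarrow> f l = 0"
  shows "(\<Sum>l<n. f l) = (if a < n then f a else 0)"
proof -
  have "(\<Sum>l<n. f l) = (\<Sum>l<n. if l = a then f a else 0)"
    using assms by (intro sum.cong) auto
  then show ?thesis by simp
qed

lemma msupp_zero [simp]: "msupp n 0"
  unfolding msupp_def by simp

lemma msupp_add: "msupp n X \<Longrightarrow> msupp n Y \<Longrightarrow> msupp n (X + Y)"
  unfolding msupp_def by simp

lemma msupp_diff: "msupp n X \<Longrightarrow> msupp n Y \<Longrightarrow> msupp n (X - Y)"
  unfolding msupp_def by simp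

lemma msupp_msc: "msupp n X \<Longrightarrow> msupp n (msc a X)"
  unfolding msupp_def msc_def by simp

lemma msupp_mmul: "msupp n A \<Longrightarrow> msupp n B \<Longrightarrow> msupp n (mmul n A B)"
  unfolding msupp_def mmul_def by auto

lemma msupp_madj: "msupp n X \<Longrightarrow> msupp n (madj X)"
  unfolding msupp_def madj_def by auto

lemma mmul_assoc: "mmul n (mmul n A B) C = mmul n A (mmul n B C)"
  unfolding mmul_def
  by (intro ext) (simp add: sum_distrib_left sum_distrib_right mult.assoc, rule sum.swap)

lemma mmul_mid_left: "msupp n X \<Longrightarrow> mmul n (mid n) X = X"
  unfolding mmul_def mid_def msupp_def
proof (intro ext)
  fix i j assume "\<forall>i j. (n \<le> i \<or> n \<le> j) \<longrightarrow> X i j = 0"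
  then show "(\<Sum>k<n. (if i = k \<and> i < n then 1 else 0) * X k j) = X i j"
    by (subst sum_single[where a = i]) auto
qed

lemma mmul_mid_right: "msupp n X \<Longrightarrow> mmul n X (mid n) = X"
  unfolding mmul_def mid_def msupp_def
proof (intro ext)
  fix i j assume "\<forall>i j. (n \<le> i \<or> n \<le> j) \<longrightarrow> X i j = 0"
  then show "(\<Sum>k<n. X i k * (if k = j \<and> k < n then 1 else 0)) = X i j"
    by (subst sum_single[where a = j]) auto
qed

lemma mmul_add_left: "mmul n (A + B) C = mmul n A C + mmul n B C"
  unfolding mmul_def by (intro ext) (simp add: distrib_right sum.distrib)

lemma mmul_add_right: "mmul n C (A + B) = mmul n C A + mmul n C B"
  unfolding mmul_def by (intro ext) (simp add: distrib_left sum.distrib)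

lemma mmul_diff_left: "mmul n (A - B) C = mmul n A C - mmul n B C"
  unfolding mmul_def by (intro ext) (simp add: left_diff_distrib sum_subtractf)

lemma mmul_diff_right: "mmul n C (A - B) = mmul n C A - mmul n C B"
  unfolding mmul_def by (intro ext) (simp add: right_diff_distrib sum_subtractf)

lemma mmul_uminus_left: "mmul n (- A) C = - mmul n A C"
  unfolding mmul_def by (intro ext) (simp add: sum_negf)

lemma mmul_uminus_right: "mmul n C (- A) = - mmul n C A"
  unfolding mmul_def by (intro ext) (simp add: sum_negf)

lemma mmul_zero_left [simp]: "mmul n 0 C = 0"
  unfolding mmul_def by (intro ext) simp

lemma mmul_zero_right [simp]: "mmul n C 0 = 0"
  unfolding mmul_def by (intro ext) simp

lemma mmul_msc_left: "mmul n (msc a A) C = msc a (mmul n A C)"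
  unfolding mmul_def msc_def by (intro ext) (simp add: sum_distrib_left mult.assoc)

lemma mmul_msc_right: "mmul n C (msc a A) = msc a (mmul n C A)"
  unfolding mmul_def msc_def by (intro ext) (simp add: sum_distrib_left mult.left_commute)

lemmas mmul_lin = mmul_add_left mmul_add_right mmul_diff_left mmul_diff_right
  mmul_uminus_left mmul_uminus_right mmul_msc_left mmul_msc_right

lemma madj_mmul: "madj (mmul n A B) = mmul n (madj B) (madj A)"
  unfolding madj_def mmul_def by (intro ext) (simp add: mult.commute)

lemma madj_add: "madj (A + B) = madj A + madj B"
  unfolding madj_def by (intro ext) simp

lemma madj_diff: "madj (A - B) = madj A - madj B"
  unfolding madj_def by (intro ext) simp

lemma madj_msc: "madj (msc a A) = msc a (madj A)"
  unfolding madj_def msc_def by (intro ext) simp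

lemma madj_zero [simp]: "madj 0 = 0"
  unfolding madj_def by (intro ext) simp

lemma msc_one [simp]: "msc 1 X = X"
  unfolding msc_def by simp

lemma msc_minus_one: "msc (-1) X = - X"
  unfolding msc_def by (intro ext) simp

lemma msc_uminus: "msc a (- X) = - msc a X"
  unfolding msc_def by (intro ext) simp

lemma msc_msc: "msc a (msc b X) = msc (a * b) X"
  unfolding msc_def by (intro ext) simp

lemma msc_diff: "msc a (X - Y) = msc a X - msc a Y"
  unfolding msc_def by (intro ext) (simp add: algebra_simps)

lemma mtrace_mmul_commute: "mtrace n (mmul n A B) = mtrace n (mmul n B A)"
  unfolding mtrace_def mmul_def by (subst sum.swap) (simp add: mult.commute)

lemma mtrace_add: "mtrace n (A + B) = mtrace n A + mtrace n B"
  unfolding mtrace_def by (simp add: sum.distrib)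

lemma mtrace_diff: "mtrace n (A - B) = mtrace n A - mtrace n B"
  unfolding mtrace_def by (simp add: sum_subtractf)

lemma mtrace_uminus: "mtrace n (- A) = - mtrace n A"
  unfolding mtrace_def by (simp add: sum_negf)

lemma mtrace_msc: "mtrace n (msc a A) = complex_of_real a * mtrace n A"
  unfolding mtrace_def msc_def by (simp add: sum_distrib_left)

lemma mtrace_zero [simp]: "mtrace n 0 = 0"
  unfolding mtrace_def by simp

lemma mtrace_madj: "mtrace n (madj A) = cnj (mtrace n A)"
  unfolding mtrace_def madj_def by simp

lemma brk_antisym: "brk n X Y = - brk n Y X"
  unfolding brk_def by simp

lemma brk_add_left: "brk n (A + B) C = brk n A C + brk n B C"
  unfolding brk_def by (simp add: mmul_lin algebra_simps)

lemma brk_add_right: "brk n C (A + B) = brk n C A + brk n C B"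
  unfolding brk_def by (simp add: mmul_lin algebra_simps)

lemma brk_diff_left: "brk n (A - B) C = brk n A C - brk n B C"
  unfolding brk_def by (simp add: mmul_lin algebra_simps)

lemma brk_diff_right: "brk n C (A - B) = brk n C A - brk n C B"
  unfolding brk_def by (simp add: mmul_lin algebra_simps)

lemma brk_uminus_left: "brk n (- A) C = - brk n A C"
  unfolding brk_def by (simp add: mmul_lin algebra_simps)

lemma brk_uminus_right: "brk n C (- A) = - brk n C A"
  unfolding brk_def by (simp add: mmul_lin algebra_simps)

lemma brk_msc_left: "brk n (msc a A) C = msc a (brk n A C)"
  unfolding brk_def by (simp add: mmul_lin msc_diff)

lemma brk_msc_right: "brk n C (msc a A) = msc a (brk n C A)"
  unfolding brk_def by (simp add: mmul_lin msc_diff)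

lemmas brk_lin = brk_add_left brk_add_right brk_diff_left brk_diff_right
  brk_uminus_left brk_uminus_right brk_msc_left brk_msc_right

lemma jacobi: "brk n X (brk n Y Z) + brk n Y (brk n Z X) + brk n Z (brk n X Y) = 0"
  unfolding brk_def by (simp add: mmul_lin mmul_assoc)

lemma msupp_brk: "msupp n X \<Longrightarrow> msupp n Y \<Longrightarrow> msupp n (brk n X Y)"
  unfolding brk_def by (simp add: msupp_mmul msupp_diff)

lemma Bform_sum: "Bform n X Y = (\<Sum>a<n. \<Sum>b<n. X a b * Y b a) / 2"
  unfolding Bform_def mtrace_def mmul_def by simp

lemma Bform_sym: "Bform n X Y = Bform n Y X"
  unfolding Bform_def by (simp add: mtrace_mmul_commute)

lemma Bform_uminus_left: "Bform n (- A) Z = - Bform n A Z"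
  unfolding Bform_def by (simp add: mmul_lin mtrace_uminus)

lemma Bform_add_right: "Bform n Z (A + B) = Bform n Z A + Bform n Z B"
  unfolding Bform_def by (simp add: mmul_lin mtrace_add add_divide_distrib)

lemma Bform_diff_right: "Bform n Z (A - B) = Bform n Z A - Bform n Z B"
  unfolding Bform_def by (simp add: mmul_lin mtrace_diff diff_divide_distrib)

lemma Bform_ad_invariant: "Bform n (brk n X Y) Z = - Bform n Y (brk n X Z)"
proof -
  have "mtrace n (mmul n (mmul n X Y) Z) = mtrace n (mmul n Y (mmul n Z X))"
    by (metis mmul_assoc mtrace_mmul_commute)
  then show ?thesis
    unfolding Bform_def brk_def by (simp add: mmul_lin mtrace_diff mmul_assoc field_simps)
qed

lemma Bform_brk_assoc: "Bform n (brk n X Y) Z = Bform n X (brk n Y Z)"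
  using Bform_ad_invariant[of n Y X Z] brk_antisym[of n X Y] Bform_uminus_left[of n "brk n Y X" Z]
  by simp

section \<open>Real Lie subalgebras and Nijenhuis tensors\<close>

locale lie_subalgebra =
  fixes n :: nat and L :: "cmat set"
  assumes msupp: "X \<in> L \<Longrightarrow> msupp n X"
    and zero_mem: "0 \<in> L"
    and lincomb_mem: "X \<in> L \<Longrightarrow> Y \<in> L \<Longrightarrow> msc a X + Y \<in> L"
    and brk_mem: "X \<in> L \<Longrightarrow> Y \<in> L \<Longrightarrow> brk n X Y \<in> L"
begin

lemma add_mem: "X \<in> L \<Longrightarrow> Y \<in> L \<Longrightarrow> X + Y \<in> L"
  using lincomb_mem[of X Y 1] by simp

lemma msc_mem: "X \<in> L \<Longrightarrow> msc a X \<in> L"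
  using lincomb_mem[OF _ zero_mem, of X a] by simp

lemma uminus_mem: "X \<in> L \<Longrightarrow> - X \<in> L"
  using msc_mem[of X "-1"] by (simp add: msc_minus_one)

lemma diff_mem: "X \<in> L \<Longrightarrow> Y \<in> L \<Longrightarrow> X - Y \<in> L"
  using add_mem[OF _ uminus_mem, of X Y] by simp

context
  fixes J :: "cmat \<Rightarrow> cmat"
  assumes J: "lin_endo L J"
begin

lemma lin_endo_mem: "X \<in> L \<Longrightarrow> J X \<in> L"
  using J unfolding lin_endo_def by blast

lemma lin_endo_lincomb: "X \<in> L \<Longrightarrow> Y \<in> L \<Longrightarrow> J (msc a X + Y) = msc a (J X) + J Y"
  using J unfolding lin_endo_def by blast

lemma lin_endo_add: "X \<in> L \<Longrightarrow> Y \<in> L \<Longrightarrow> J (X + Y) = J X + J Y"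
  using lin_endo_lincomb[of X Y 1] by simp

lemma lin_endo_zero: "J 0 = 0"
  using lin_endo_add[OF zero_mem zero_mem] by simp

lemma lin_endo_msc: "X \<in> L \<Longrightarrow> J (msc a X) = msc a (J X)"
  using lin_endo_lincomb[OF _ zero_mem, of X a] by (simp add: lin_endo_zero)

lemma lin_endo_uminus: "X \<in> L \<Longrightarrow> J (- X) = - J X"
  using lin_endo_msc[of X "-1"] by (simp add: msc_minus_one)

lemma lin_endo_diff: "X \<in> L \<Longrightarrow> Y \<in> L \<Longrightarrow> J (X - Y) = J X - J Y"
  using lin_endo_add[OF _ uminus_mem, of X Y] lin_endo_uminus[of Y] by simp

end

lemma lin_endo_cong:
  assumes "lin_endo L J'" and "\<And>X. X \<in> L \<Longrightarrow> J X = J' X"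
  shows "lin_endo L J"
  using assms lincomb_mem lin_endo_mem[OF assms(1)] unfolding lin_endo_def by simp

lemma lin_endo_comp:
  assumes A: "lin_endo L A" and B: "lin_endo L B"
  shows "lin_endo L (\<lambda>X. A (B X))"
  using lin_endo_mem[OF A] lin_endo_mem[OF B] lin_endo_lincomb[OF A] lin_endo_lincomb[OF B]
  unfolding lin_endo_def by simp

end

lemma lie_subalgebra_su_form: "lie_subalgebra n (su_form n S)"
proof
  fix X Y a assume X: "X \<in> su_form n S" and Y: "Y \<in> su_form n S"
  have hX: "mmul n (madj X) S = - mmul n S X" and hY: "mmul n (madj Y) S = - mmul n S Y"
    using X Y unfolding su_form_def by (simp_all add: eq_neg_iff_add_eq_0)
  have "mmul n (madj (msc a X + Y)) S + mmul n S (msc a X + Y) = 0"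
    by (simp add: madj_add madj_msc mmul_lin hX hY msc_uminus)
  then show "msc a X + Y \<in> su_form n S"
    using X Y unfolding su_form_def by (simp add: msupp_add msupp_msc mtrace_add mtrace_msc)
  have adj_mmul: "mmul n (madj (mmul n A B)) S = mmul n S (mmul n B A)"
    if hA: "mmul n (madj A) S = - mmul n S A" and hB: "mmul n (madj B) S = - mmul n S B" for A B
  proof -
    have "mmul n (madj (mmul n A B)) S = mmul n (madj B) (mmul n (madj A) S)"
      by (simp add: madj_mmul mmul_assoc)
    also have "\<dots> = - mmul n (mmul n (madj B) S) A" by (simp add: hA mmul_lin mmul_assoc)
    also have "\<dots> = mmul n S (mmul n B A)" by (simp add: hB mmul_lin mmul_assoc)
    finally show ?thesis .
  qed
  have "mmul n (madj (brk n X Y)) S + mmul n S (brk n X Y) = 0"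
    unfolding brk_def by (simp add: madj_diff mmul_lin adj_mmul hX hY)
  then show "brk n X Y \<in> su_form n S"
    using X Y unfolding su_form_def brk_def
    by (simp add: mtrace_diff mtrace_mmul_commute msupp_diff msupp_mmul)
qed (simp_all add: su_form_def)

context lie_subalgebra
begin

lemma nijenhuis_add_left:
  assumes J: "lin_endo L J" and "X1 \<in> L" "X2 \<in> L" "Y \<in> L"
  shows "nijenhuis n J (X1 + X2) Y = nijenhuis n J X1 Y + nijenhuis n J X2 Y"
  using assms unfolding nijenhuis_def
  by (simp add: brk_lin lin_endo_mem[OF J] lin_endo_add[OF J] brk_mem add_mem algebra_simps)

lemma nijenhuis_add_right:
  assumes J: "lin_endo L J" and "X \<in> L" "Y1 \<in> L" "Y2 \<in> L"
  shows "nijenhuis n J X (Y1 + Y2) = nijenhuis n J X Y1 + nijenhuis n J X Y2"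
  using assms unfolding nijenhuis_def
  by (simp add: brk_lin lin_endo_mem[OF J] lin_endo_add[OF J] brk_mem add_mem algebra_simps)

lemma nijenhuis_eigenvectors:
  assumes J: "lin_endo L J" and JJ: "\<And>X. X \<in> L \<Longrightarrow> J (J X) = X"
    and plus: "\<And>X Y. X \<in> L \<Longrightarrow> Y \<in> L \<Longrightarrow> J X = X \<Longrightarrow> J Y = Y \<Longrightarrow> J (brk n X Y) = brk n X Y"
    and minus: "\<And>X Y. X \<in> L \<Longrightarrow> Y \<in> L \<Longrightarrow> J X = - X \<Longrightarrow> J Y = - Y \<Longrightarrow> J (brk n X Y) = - brk n X Y"
    and A: "A \<in> L" "J A = msc s A" "s * s = 1" and B: "B \<in> L" "J B = msc t B" "t * t = 1"
  shows "nijenhuis n J A B = 0"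
proof -
  have AB: "brk n A B \<in> L" using A B brk_mem by blast
  consider "s = 1" "t = 1" | "s = -1" "t = -1" | "s = - t"
    using A(3) B(3) by (metis minus_mult_minus mult_cancel_left1 square_eq_1_iff)
  then show ?thesis
  proof cases
    case 1
    then show ?thesis using A B plus[of A B] unfolding nijenhuis_def by simp
  next
    case 2
    then show ?thesis using A B minus[of A B] AB unfolding nijenhuis_def
      by (simp add: msc_minus_one brk_lin lin_endo_uminus[OF J])
  next
    case 3
    have "nijenhuis n J A B = msc (- (t * t)) (brk n A B) - msc (-t) (J (brk n A B))
        - msc t (J (brk n A B)) + brk n A B"
      using A B AB JJ[OF AB] 3 unfolding nijenhuis_def
      by (simp add: brk_lin lin_endo_msc[OF J] msc_msc)
    also have "\<dots> = 0"
      using B(3) unfolding msc_def by (intro ext) simp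
    finally show ?thesis .
  qed
qed

lemma product_structure_integrable:
  assumes J: "lin_endo L J" and JJ: "\<And>X. X \<in> L \<Longrightarrow> J (J X) = X"
    and plus: "\<And>X Y. X \<in> L \<Longrightarrow> Y \<in> L \<Longrightarrow> J X = X \<Longrightarrow> J Y = Y \<Longrightarrow> J (brk n X Y) = brk n X Y"
    and minus: "\<And>X Y. X \<in> L \<Longrightarrow> Y \<in> L \<Longrightarrow> J X = - X \<Longrightarrow> J Y = - Y \<Longrightarrow> J (brk n X Y) = - brk n X Y"
    and X: "X \<in> L" and Y: "Y \<in> L"
  shows "nijenhuis n J X Y = 0"
proof -
  define pr :: "real \<Rightarrow> cmat \<Rightarrow> cmat" where "pr s Z = msc (1/2) (Z + msc s (J Z))" for s Z
  have pr_mem: "pr s Z \<in> L" if "Z \<in> L" for s Z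
    unfolding pr_def using that by (simp add: msc_mem add_mem lin_endo_mem[OF J])
  have J_pr: "J (pr s Z) = msc s (pr s Z)" if Z: "Z \<in> L" and s: "s * s = 1" for s Z
  proof -
    have s': "complex_of_real s * complex_of_real s = 1" using s by (metis of_real_mult of_real_1)
    have "J (pr s Z) = msc (1/2) (J Z + msc s Z)"
      unfolding pr_def using Z
      by (simp add: lin_endo_msc[OF J] lin_endo_add[OF J] msc_mem add_mem lin_endo_mem[OF J] JJ)
    also have "\<dots> = msc s (pr s Z)"
      unfolding pr_def msc_def by (intro ext) (simp add: algebra_simps s' flip: mult.assoc)
    finally show ?thesis .
  qed
  have split: "Z = pr 1 Z + pr (-1) Z" for Z
    unfolding pr_def msc_def by (intro ext) (simp add: field_simps)
  have "nijenhuis n J X Y = nijenhuis n J (pr 1 X) (pr 1 Y) + nijenhuis n J (pr 1 X) (pr (-1) Y)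
      + (nijenhuis n J (pr (-1) X) (pr 1 Y) + nijenhuis n J (pr (-1) X) (pr (-1) Y))"
    using X Y split[of X] split[of Y]
    by (metis pr_mem nijenhuis_add_left[OF J] nijenhuis_add_right[OF J] add_mem)
  moreover have "nijenhuis n J (pr s X) (pr t Y) = 0" if "s * s = 1" "t * t = 1" for s t
    using nijenhuis_eigenvectors[OF J JJ plus minus pr_mem J_pr _ pr_mem J_pr] X Y that by blast
  ultimately show ?thesis by simp
qed

lemma nijenhuis_composite:
  assumes A: "lin_endo L A" and B: "lin_endo L B"
    and AA: "\<And>X. X \<in> L \<Longrightarrow> A (A X) = X" and BB: "\<And>X. X \<in> L \<Longrightarrow> B (B X) = X"
    and BA: "\<And>X. X \<in> L \<Longrightarrow> B (A X) = - A (B X)"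
    and X: "X \<in> L" and Y: "Y \<in> L"
  shows "nijenhuis n (\<lambda>Z. A (B Z)) X Y + nijenhuis n (\<lambda>Z. A (B Z)) X Y =
      nijenhuis n A (B X) (B Y) - nijenhuis n A X Y
        - B (nijenhuis n A X (B Y)) - B (nijenhuis n A (B X) Y)
      + nijenhuis n B (A X) (A Y) - nijenhuis n B X Y
        - A (nijenhuis n B X (A Y)) - A (nijenhuis n B (A X) Y)"
  using X Y unfolding nijenhuis_def
  by (simp add: lin_endo_mem[OF A] lin_endo_mem[OF B] brk_mem add_mem diff_mem uminus_mem
      lin_endo_add[OF A] lin_endo_diff[OF A] lin_endo_uminus[OF A]
      lin_endo_add[OF B] lin_endo_diff[OF B] lin_endo_uminus[OF B]
      AA BB BA brk_uminus_left brk_uminus_right algebra_simps)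

lemma nijenhuis_cong:
  assumes J': "lin_endo L J'" and eq: "\<And>X. X \<in> L \<Longrightarrow> J X = J' X" and "X \<in> L" "Y \<in> L"
  shows "nijenhuis n J X Y = nijenhuis n J' X Y"
  unfolding nijenhuis_def using assms by (simp add: lin_endo_mem[OF J'] brk_mem)

lemma composite_integrable:
  assumes A: "lin_endo L A" and B: "lin_endo L B"
    and AA: "\<And>X. X \<in> L \<Longrightarrow> A (A X) = X" and BB: "\<And>X. X \<in> L \<Longrightarrow> B (B X) = X"
    and BA: "\<And>X. X \<in> L \<Longrightarrow> B (A X) = - A (B X)"
    and NA: "\<And>X Y. X \<in> L \<Longrightarrow> Y \<in> L \<Longrightarrow> nijenhuis n A X Y = 0"
    and NB: "\<And>X Y. X \<in> L \<Longrightarrow> Y \<in> L \<Longrightarrow> nijenhuis n B X Y = 0"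
    and X: "X \<in> L" and Y: "Y \<in> L"
  shows "nijenhuis n (\<lambda>Z. A (B Z)) X Y = 0"
proof -
  let ?N = "nijenhuis n (\<lambda>Z. A (B Z)) X Y"
  have AX: "A X \<in> L" "A Y \<in> L" and BX: "B X \<in> L" "B Y \<in> L"
    using X Y lin_endo_mem[OF A] lin_endo_mem[OF B] by auto
  have N2: "?N + ?N = 0"
    using nijenhuis_composite[OF A B AA BB BA X Y]
    unfolding NA[OF X Y] NA[OF BX] NA[OF X BX(2)] NA[OF BX(1) Y] NB[OF X Y] NB[OF AX]
      NB[OF X AX(2)] NB[OF AX(1) Y] lin_endo_zero[OF A] lin_endo_zero[OF B]
    by (simp add: fun_eq_iff)
  show ?thesis
  proof (rule cmat_eqI)
    fix i j
    have "?N i j + ?N i j = 0" using fun_cong[OF fun_cong[OF N2, of i], of j] by simp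
    then show "?N i j = 0 i j" by simp
  qed
qed

end

lemma hyper_paracomplex_lin_endo:
  assumes "hyper_paracomplex n L J1 J2 J3"
  shows "lin_endo L J1" "lin_endo L J2" "lin_endo L J3"
  using assms unfolding hyper_paracomplex_def almost_hyper_paracomplex_def by auto

section \<open>The connection with parallel left-invariant fields\<close>

lemma torsion3_zero_connection: "torsion3 n (Bform n) (\<lambda>X Y. 0) X Y Z = - Bform n (brk n X Y) Z"
  unfolding torsion3_def torsion_def by (simp add: Bform_uminus_left)

context lie_subalgebra
begin

lemma HPKT_connection_zero:
  assumes "lin_endo L J1" "lin_endo L J2" "lin_endo L J3"
  shows "HPKT_connection n L (Bform n) J1 J2 J3 (\<lambda>X Y. 0)"
  unfolding HPKT_connection_def torsion3_zero_connection
proof (intro conjI ballI)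
  fix X Y Z
  show "- Bform n (brk n X Y) Z = - (- Bform n (brk n Y X) Z)"
    by (simp add: brk_antisym[of n Y X] Bform_uminus_left)
  show "- Bform n (brk n X Y) Z = - (- Bform n (brk n X Z) Y)"
    using Bform_ad_invariant[of n X Y Z] Bform_sym[of n Y "brk n X Z"] by simp
  show "Bform n 0 Z + Bform n Y 0 = 0"
    unfolding Bform_def by simp
  fix J assume "J \<in> {J1, J2, J3}"
  then show "0 - J 0 = 0" using assms lin_endo_zero by auto
qed (rule zero_mem)

end

lemma flat_conn_zero: "flat_conn n L (\<lambda>X Y. 0)"
  unfolding flat_conn_def curvature_def by simp

lemma d3_torsion3_zero_connection: "d3 n (torsion3 n (Bform n) (\<lambda>X Y. 0)) X0 X1 X2 X3 = 0"
proof -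
  have "brk n X1 (brk n X2 X3) - brk n X2 (brk n X1 X3) + brk n X3 (brk n X1 X2) = 0"
    using jacobi[of n X1 X2 X3] brk_antisym[of n X3 X1] by (simp add: brk_lin algebra_simps)
  then have "Bform n X0 (brk n X1 (brk n X2 X3) - brk n X2 (brk n X1 X3) + brk n X3 (brk n X1 X2)) = 0"
    unfolding Bform_def by simp
  then have jac: "Bform n (brk n X0 X1) (brk n X2 X3) - Bform n (brk n X0 X2) (brk n X1 X3)
      + Bform n (brk n X0 X3) (brk n X1 X2) = 0"
    by (simp add: Bform_add_right Bform_diff_right Bform_brk_assoc)
  have sym: "Bform n (brk n X1 X2) (brk n X0 X3) = Bform n (brk n X0 X3) (brk n X1 X2)"
    "Bform n (brk n X1 X3) (brk n X0 X2) = Bform n (brk n X0 X2) (brk n X1 X3)"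
    "Bform n (brk n X2 X3) (brk n X0 X1) = Bform n (brk n X0 X1) (brk n X2 X3)"
    by (rule Bform_sym)+
  show ?thesis
    unfolding d3_def torsion3_zero_connection Bform_brk_assoc[of n "brk n _ _"] sym
    using jac by (simp add: algebra_simps)
qed

section \<open>Transport along a matrix conjugation\<close>

definition mconj :: "nat \<Rightarrow> cmat \<Rightarrow> cmat \<Rightarrow> cmat \<Rightarrow> cmat" where
  "mconj n Q Q' X = mmul n (mmul n Q X) Q'"

definition inverse_pair :: "nat \<Rightarrow> cmat \<Rightarrow> cmat \<Rightarrow> bool" where
  "inverse_pair n Q Q' \<longleftrightarrow> msupp n Q \<and> msupp n Q' \<and> mmul n Q Q' = mid n \<and> mmul n Q' Q = mid n"

definition conj_endo :: "nat \<Rightarrow> cmat \<Rightarrow> cmat \<Rightarrow> (cmat \<Rightarrow> cmat) \<Rightarrow> cmat \<Rightarrow> cmat" where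
  "conj_endo n Q Q' J = (\<lambda>X. mconj n Q Q' (J (mconj n Q' Q X)))"

lemma inverse_pair_sym: "inverse_pair n Q Q' \<Longrightarrow> inverse_pair n Q' Q"
  unfolding inverse_pair_def by auto

lemma mconj_add: "mconj n Q Q' (X + Y) = mconj n Q Q' X + mconj n Q Q' Y"
  unfolding mconj_def by (simp add: mmul_lin)

lemma mconj_diff: "mconj n Q Q' (X - Y) = mconj n Q Q' X - mconj n Q Q' Y"
  unfolding mconj_def by (simp add: mmul_lin)

lemma mconj_msc: "mconj n Q Q' (msc a X) = msc a (mconj n Q Q' X)"
  unfolding mconj_def by (simp add: mmul_lin)

lemma mconj_zero [simp]: "mconj n Q Q' 0 = 0"
  unfolding mconj_def by simp

context
  fixes n :: nat and Q Q' :: cmat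
  assumes QQ': "inverse_pair n Q Q'"
begin

lemma msupp_mconj: "msupp n (mconj n Q Q' X)"
  using QQ' unfolding inverse_pair_def mconj_def msupp_def mmul_def by auto

lemma mconj_mconj: "msupp n X \<Longrightarrow> mconj n Q' Q (mconj n Q Q' X) = X"
  using QQ' unfolding mconj_def inverse_pair_def
  by (simp add: mmul_assoc mmul_mid_left mmul_mid_right msupp_mmul flip: mmul_assoc[of n Q' Q])

lemma mconj_mmul:
  assumes "msupp n X"
  shows "mmul n (mconj n Q Q' X) (mconj n Q Q' Y) = mconj n Q Q' (mmul n X Y)"
proof -
  have "mmul n (mconj n Q Q' X) (mconj n Q Q' Y) = mmul n Q (mmul n (mmul n X (mmul n Q' Q)) (mmul n Y Q'))"
    unfolding mconj_def by (simp add: mmul_assoc)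
  also have "\<dots> = mconj n Q Q' (mmul n X Y)"
    using QQ' assms unfolding mconj_def inverse_pair_def by (simp add: mmul_mid_right mmul_assoc)
  finally show ?thesis .
qed

lemma mconj_brk: "msupp n X \<Longrightarrow> msupp n Y \<Longrightarrow> mconj n Q Q' (brk n X Y) = brk n (mconj n Q Q' X) (mconj n Q Q' Y)"
  unfolding brk_def by (simp add: mconj_mmul mconj_diff)

lemma mtrace_mconj: "msupp n X \<Longrightarrow> mtrace n (mconj n Q Q' X) = mtrace n X"
  using QQ' unfolding mconj_def inverse_pair_def
  by (metis mmul_assoc mtrace_mmul_commute mmul_mid_left)

lemma Bform_mconj: "msupp n X \<Longrightarrow> msupp n Y \<Longrightarrow> Bform n (mconj n Q Q' X) (mconj n Q Q' Y) = Bform n X Y"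
  unfolding Bform_def by (simp add: mconj_mmul mtrace_mconj msupp_mmul)

lemma mconj_su_form:
  assumes S: "mmul n (madj Q) S2 = mmul n S1 Q'" "mmul n S2 Q = mmul n (madj Q') S1"
    and X: "X \<in> su_form n S1"
  shows "mconj n Q Q' X \<in> su_form n S2"
proof -
  have "msupp n X" "mtrace n X = 0" and X': "mmul n (madj X) S1 + mmul n S1 X = 0"
    using X unfolding su_form_def by auto
  moreover have "mmul n (madj (mconj n Q Q' X)) S2 + mmul n S2 (mconj n Q Q' X)
      = mmul n (madj Q') (mmul n (mmul n (madj X) S1 + mmul n S1 X) Q')"
    unfolding mconj_def by (simp add: madj_mmul mmul_assoc S mmul_lin flip: mmul_assoc[of n S2 Q])
  ultimately show ?thesis
    unfolding su_form_def by (simp add: msupp_mconj mtrace_mconj)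
qed

end

locale lie_conjugation =
  L1: lie_subalgebra n L1 + L2: lie_subalgebra n L2
  for n :: nat and L1 L2 :: "cmat set" +
  fixes Q Q' :: cmat
  assumes inverse_pair: "inverse_pair n Q Q'"
    and mconj_mem: "X \<in> L1 \<Longrightarrow> mconj n Q Q' X \<in> L2"
    and mconj_inv_mem: "X \<in> L2 \<Longrightarrow> mconj n Q' Q X \<in> L1"
begin

lemma mconj_inv: "X \<in> L2 \<Longrightarrow> mconj n Q Q' (mconj n Q' Q X) = X"
  using mconj_mconj[OF inverse_pair_sym[OF inverse_pair]] L2.msupp by blast

lemma mconj_inv': "X \<in> L1 \<Longrightarrow> mconj n Q' Q (mconj n Q Q' X) = X"
  using mconj_mconj[OF inverse_pair] L1.msupp by blast

lemma lin_endo_conj_endo: "lin_endo L1 J \<Longrightarrow> lin_endo L2 (conj_endo n Q Q' J)"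
  unfolding lin_endo_def conj_endo_def
  by (auto simp: mconj_mem mconj_inv_mem mconj_add mconj_msc L2.lincomb_mem)

lemma conj_endo_comp:
  "lin_endo L1 K \<Longrightarrow> X \<in> L2 \<Longrightarrow> conj_endo n Q Q' J (conj_endo n Q Q' K X) = mconj n Q Q' (J (K (mconj n Q' Q X)))"
  unfolding conj_endo_def by (simp add: mconj_inv' L1.lin_endo_mem mconj_inv_mem)

lemma Bform_conj_endo:
  assumes J: "lin_endo L1 J" and iso: "\<And>X Y. X \<in> L1 \<Longrightarrow> Y \<in> L1 \<Longrightarrow> Bform n (J X) (J Y) = c * Bform n X Y"
    and X: "X \<in> L2" and Y: "Y \<in> L2"
  shows "Bform n (conj_endo n Q Q' J X) (conj_endo n Q Q' J Y) = c * Bform n X Y"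
  using X Y unfolding conj_endo_def
  by (simp add: Bform_mconj[OF inverse_pair] Bform_mconj[OF inverse_pair_sym[OF inverse_pair]]
      L1.msupp L2.msupp L1.lin_endo_mem[OF J] mconj_inv_mem iso)

lemma nijenhuis_conj_endo:
  assumes J: "lin_endo L1 J" and N: "\<And>X Y. X \<in> L1 \<Longrightarrow> Y \<in> L1 \<Longrightarrow> nijenhuis n J X Y = 0"
    and X: "X \<in> L2" and Y: "Y \<in> L2"
  shows "nijenhuis n (conj_endo n Q Q' J) X Y = 0"
proof -
  define X' Y' where "X' = mconj n Q' Q X" and "Y' = mconj n Q' Q Y"
  have X': "X' \<in> L1" "X = mconj n Q Q' X'" and Y': "Y' \<in> L1" "Y = mconj n Q Q' Y'"
    unfolding X'_def Y'_def using X Y mconj_inv_mem mconj_inv by auto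
  have conj: "conj_endo n Q Q' J (mconj n Q Q' U) = mconj n Q Q' (J U)" if "U \<in> L1" for U
    unfolding conj_endo_def using that by (simp add: mconj_inv')
  have "nijenhuis n (conj_endo n Q Q' J) X Y = mconj n Q Q' (nijenhuis n J X' Y')"
    unfolding X'(2) Y'(2) nijenhuis_def
    by (simp add: conj mconj_brk[OF inverse_pair, symmetric] X'(1) Y'(1) L1.msupp L1.brk_mem
        L1.lin_endo_mem[OF J] mconj_add mconj_diff)
  then show ?thesis using N[OF X'(1) Y'(1)] by simp
qed

lemma hyper_paracomplex_conj_endo:
  assumes hp: "hyper_paracomplex n L1 J1 J2 J3"
  shows "hyper_paracomplex n L2 (conj_endo n Q Q' J1) (conj_endo n Q Q' J2) (conj_endo n Q Q' J3)"
proof -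
  note J = hyper_paracomplex_lin_endo[OF hp]
  have rel: "\<And>X. X \<in> L1 \<Longrightarrow> J1 (J1 X) = X \<and> J2 (J2 X) = X \<and> J3 (J3 X) = - X \<and>
      J1 (J2 X) = J3 X \<and> J2 (J1 X) = - J3 X"
    and N: "\<And>J X Y. J \<in> {J1, J2, J3} \<Longrightarrow> X \<in> L1 \<Longrightarrow> Y \<in> L1 \<Longrightarrow> nijenhuis n J X Y = 0"
    using hp unfolding hyper_paracomplex_def almost_hyper_paracomplex_def by auto
  have neg: "mconj n Q Q' (- Z) = - mconj n Q Q' Z" for Z
    using mconj_diff[of n Q Q' 0 Z] by simp
  show ?thesis
    unfolding hyper_paracomplex_def almost_hyper_paracomplex_def
  proof (intro conjI ballI)
    show "lin_endo L2 (conj_endo n Q Q' J1)" "lin_endo L2 (conj_endo n Q Q' J2)"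
      "lin_endo L2 (conj_endo n Q Q' J3)"
      using lin_endo_conj_endo J by auto
  next
    fix X assume X: "X \<in> L2"
    note rel' = rel[OF mconj_inv_mem[OF X]]
    show "conj_endo n Q Q' J1 (conj_endo n Q Q' J1 X) = X"
      "conj_endo n Q Q' J2 (conj_endo n Q Q' J2 X) = X"
      "conj_endo n Q Q' J3 (conj_endo n Q Q' J3 X) = - X"
      "conj_endo n Q Q' J1 (conj_endo n Q Q' J2 X) = conj_endo n Q Q' J3 X"
      "conj_endo n Q Q' J2 (conj_endo n Q Q' J1 X) = - conj_endo n Q Q' J3 X"
      using conj_endo_comp[OF J(1) X] conj_endo_comp[OF J(2) X] conj_endo_comp[OF J(3) X] rel'
      by (simp_all add: mconj_inv[OF X] neg conj_endo_def)
  next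
    fix J X Y assume "J \<in> {conj_endo n Q Q' J1, conj_endo n Q Q' J2, conj_endo n Q Q' J3}"
      and "X \<in> L2" "Y \<in> L2"
    then show "nijenhuis n J X Y = 0"
      using nijenhuis_conj_endo[OF J(1)] nijenhuis_conj_endo[OF J(2)] nijenhuis_conj_endo[OF J(3)] N
      by auto
  qed
qed

lemma hyperparahermitian_conj_endo:
  assumes "hyper_paracomplex n L1 J1 J2 J3" and "hyperparahermitian L1 (Bform n) J1 J2 J3"
  shows "hyperparahermitian L2 (Bform n) (conj_endo n Q Q' J1) (conj_endo n Q Q' J2) (conj_endo n Q Q' J3)"
proof -
  note J = hyper_paracomplex_lin_endo[OF assms(1)]
  have "\<And>X Y. X \<in> L1 \<Longrightarrow> Y \<in> L1 \<Longrightarrow> Bform n (J1 X) (J1 Y) = (-1) * Bform n X Y"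
    "\<And>X Y. X \<in> L1 \<Longrightarrow> Y \<in> L1 \<Longrightarrow> Bform n (J2 X) (J2 Y) = (-1) * Bform n X Y"
    "\<And>X Y. X \<in> L1 \<Longrightarrow> Y \<in> L1 \<Longrightarrow> Bform n (J3 X) (J3 Y) = 1 * Bform n X Y"
    using assms(2) unfolding hyperparahermitian_def by auto
  from Bform_conj_endo[OF J(1) this(1)] Bform_conj_endo[OF J(2) this(2)] Bform_conj_endo[OF J(3) this(3)]
  show ?thesis unfolding hyperparahermitian_def by simp
qed

end

section \<open>The trace form on \<open>su(p,q)\<close>\<close>

lemma madj_su_form:
  assumes X: "X \<in> su_form n S" and S: "mmul n S S = mid n"
  shows "madj X = - mmul n S (mmul n X S)"
proof -
  have "mmul n (madj X) S = - mmul n S X"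
    using X unfolding su_form_def by (simp add: eq_neg_iff_add_eq_0)
  moreover have "madj X = mmul n (mmul n (madj X) S) S"
    using S X by (simp add: mmul_assoc mmul_mid_right msupp_madj su_form_def)
  ultimately show ?thesis by (simp add: mmul_lin mmul_assoc)
qed

lemma Im_Bform_su_form:
  assumes X: "X \<in> su_form n S" and Y: "Y \<in> su_form n S"
    and S: "msupp n S" "mmul n S S = mid n"
  shows "Im (Bform n X Y) = 0"
proof -
  have SS: "mmul n S (mmul n S Z) = Z" if "msupp n Z" for Z
    using S(2) that by (simp flip: mmul_assoc add: mmul_mid_left)
  have XS: "msupp n (mmul n X S)" and YX: "msupp n (mmul n Y X)"
    using X Y S(1) by (simp_all add: msupp_mmul su_form_def)
  have "cnj (mtrace n (mmul n X Y)) = mtrace n (mmul n (madj Y) (madj X))"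
    by (simp add: madj_mmul flip: mtrace_madj)
  also have "\<dots> = mtrace n (mmul n S (mmul n Y (mmul n X S)))"
    using X Y S(2) XS by (simp add: madj_su_form mmul_lin mmul_assoc SS)
  also have "\<dots> = mtrace n (mmul n (mmul n Y (mmul n X S)) S)"
    by (rule mtrace_mmul_commute)
  also have "\<dots> = mtrace n (mmul n (mmul n Y X) (mmul n S S))"
    by (simp add: mmul_assoc)
  also have "\<dots> = mtrace n (mmul n X Y)"
    using S(2) YX by (simp add: mmul_mid_right mtrace_mmul_commute[of n Y X])
  finally have "cnj (mtrace n (mmul n X Y)) = mtrace n (mmul n X Y)" .
  then show ?thesis
    unfolding Bform_def by (metis Reals_cnj_iff complex_is_Real_iff Im_divide_numeral div_0)
qed

definition ipq_sign :: "nat \<Rightarrow> nat \<Rightarrow> complex" where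
  "ipq_sign p i = (if i < p then 1 else -1)"

lemma mmul_Ipq_left:
  "mmul (p + q) (Ipq p q) X a b = (if a < p + q then ipq_sign p a * X a b else 0)"
  unfolding mmul_def Ipq_def ipq_sign_def by (subst sum_single[where a = a]) auto

lemma mmul_Ipq_right:
  "mmul (p + q) X (Ipq p q) a b = (if b < p + q then X a b * ipq_sign p b else 0)"
  unfolding mmul_def Ipq_def ipq_sign_def by (subst sum_single[where a = b]) auto

lemma Ipq_square: "mmul (p + q) (Ipq p q) (Ipq p q) = mid (p + q)"
  by (intro cmat_eqI) (simp add: mmul_Ipq_left, simp add: Ipq_def ipq_sign_def mid_def)

lemma msupp_Ipq: "msupp (p + q) (Ipq p q)"
  unfolding msupp_def Ipq_def by simp

lemma lie_subalgebra_su_pq: "lie_subalgebra (p + q) (su_pq p q)"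
  unfolding su_pq_eq_su_form by (rule lie_subalgebra_su_form)

lemma Im_Bform_su_pq: "X \<in> su_pq p q \<Longrightarrow> Y \<in> su_pq p q \<Longrightarrow> Im (Bform (p + q) X Y) = 0"
  unfolding su_pq_eq_su_form by (rule Im_Bform_su_form[OF _ _ msupp_Ipq Ipq_square])

lemma su_pq_iff:
  "X \<in> su_pq p q \<longleftrightarrow> msupp (p + q) X \<and> mtrace (p + q) X = 0 \<and>
     (\<forall>i<p + q. \<forall>j<p + q. cnj (X j i) * ipq_sign p j + ipq_sign p i * X i j = 0)"
proof -
  have "mmul (p + q) (madj X) (Ipq p q) + mmul (p + q) (Ipq p q) X = 0 \<longleftrightarrow>
      (\<forall>i<p + q. \<forall>j<p + q. cnj (X j i) * ipq_sign p j + ipq_sign p i * X i j = 0)"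
    if "msupp (p + q) X"
    using that unfolding fun_eq_iff msupp_def
    by (auto simp: mmul_Ipq_left mmul_Ipq_right madj_def)
  then show ?thesis
    unfolding su_pq_eq_su_form su_form_def by auto
qed

definition root_vec :: "nat \<Rightarrow> nat \<Rightarrow> nat \<Rightarrow> complex \<Rightarrow> cmat" where
  "root_vec p a b c = (\<lambda>i j. if i = a \<and> j = b then c
     else if i = b \<and> j = a then - ipq_sign p a * ipq_sign p b * cnj c else 0)"

definition coroot :: "nat \<Rightarrow> nat \<Rightarrow> cmat" where
  "coroot a b = (\<lambda>i j. if i = j \<and> i = a then \<i> else if i = j \<and> i = b then - \<i> else 0)"

lemma root_vec_mem:
  assumes "a < p + q" "b < p + q" "a \<noteq> b"
  shows "root_vec p a b c \<in> su_pq p q"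
  unfolding su_pq_iff
proof (intro conjI allI impI)
  show "msupp (p + q) (root_vec p a b c)"
    unfolding msupp_def root_vec_def using assms by auto
  show "mtrace (p + q) (root_vec p a b c) = 0"
    unfolding mtrace_def root_vec_def using assms by (intro sum.neutral) auto
  fix i j
  show "cnj (root_vec p a b c j i) * ipq_sign p j + ipq_sign p i * root_vec p a b c i j = 0"
    unfolding root_vec_def ipq_sign_def using assms by auto
qed

lemma coroot_mem:
  assumes "a < p + q" "b < p + q" "a \<noteq> b"
  shows "coroot a b \<in> su_pq p q"
  unfolding su_pq_iff
proof (intro conjI allI impI)
  show "msupp (p + q) (coroot a b)"
    unfolding msupp_def coroot_def using assms by auto
  have "mtrace (p + q) (coroot a b) = (\<Sum>i<p + q. (if i = a then \<i> else 0) + (if i = b then - \<i> else 0))"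
    unfolding mtrace_def coroot_def using assms by (intro sum.cong) auto
  then show "mtrace (p + q) (coroot a b) = 0"
    using assms by (simp add: sum.distrib)
  fix i j
  show "cnj (coroot a b j i) * ipq_sign p j + ipq_sign p i * coroot a b i j = 0"
    unfolding coroot_def using assms by (auto simp: algebra_simps)
qed

lemma Bform_root_vec:
  assumes "a < n" "b < n" "a \<noteq> b"
  shows "Bform n X (root_vec p a b c) = (X b a * c - X a b * ipq_sign p a * ipq_sign p b * cnj c) / 2"
proof -
  have "(\<Sum>j<n. X i j * root_vec p a b c j i) =
      (if i = b then X b a * c else 0) - (if i = a then X a b * ipq_sign p a * ipq_sign p b * cnj c else 0)"
    for i
    using assms unfolding root_vec_def
    by (subst sum_single[where a = "if i = b then a else b"]) auto
  then show ?thesis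
    unfolding Bform_sum using assms by (simp add: sum_subtractf)
qed

lemma Bform_coroot:
  assumes "a < n" "b < n" "a \<noteq> b"
  shows "Bform n X (coroot a b) = \<i> * (X a a - X b b) / 2"
proof -
  have "(\<Sum>j<n. X i j * coroot a b j i) = (if i = a then \<i> * X a a else 0) - (if i = b then \<i> * X b b else 0)"
    for i
    using assms unfolding coroot_def by (subst sum_single[where a = i]) auto
  then show ?thesis
    unfolding Bform_sum using assms by (simp add: sum_subtractf right_diff_distrib)
qed

lemma Bform_nondegenerate_su_pq:
  assumes X: "X \<in> su_pq p q" and B: "\<forall>Y\<in>su_pq p q. Bform (p + q) X Y = 0"
  shows "X = 0"
proof -
  let ?n = "p + q"
  have off: "X b a = 0" if "a < ?n" "b < ?n" "a \<noteq> b" for a b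
  proof -
    have "X b a - X a b * ipq_sign p a * ipq_sign p b = 0"
      and "X b a * \<i> + X a b * ipq_sign p a * ipq_sign p b * \<i> = 0"
      using B root_vec_mem[OF that, of 1] root_vec_mem[OF that, of \<i>]
        Bform_root_vec[OF that, of X p 1] Bform_root_vec[OF that, of X p \<i>] by auto
    then show ?thesis by (simp add: algebra_simps)
  qed
  have diag: "X a a = X 0 0" if a: "a < ?n" for a
  proof (cases "a = 0")
    case False
    have "0 < ?n" using a by linarith
    then show ?thesis using B coroot_mem[OF a _ False] Bform_coroot[OF a _ False, of X] by auto
  qed simp
  have "of_nat ?n * X 0 0 = mtrace ?n X"
    unfolding mtrace_def using diag by simp
  also have "\<dots> = 0" using X unfolding su_pq_iff by simp
  finally have "of_nat ?n * X 0 0 = 0" .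
  then have n0: "?n = 0 \<or> X 0 0 = 0"
    unfolding mult_eq_0_iff of_nat_eq_0_iff .
  show ?thesis
  proof (rule cmat_eqI)
    fix i j
    show "X i j = 0 i j"
    proof (cases "i < ?n \<and> j < ?n")
      case True
      then show ?thesis using off[of j i] diag[of i] n0 by (cases "i = j") auto
    next
      case False
      then show ?thesis using X unfolding su_pq_iff msupp_def by auto
    qed
  qed
qed

section \<open>The antidiagonal model of \<open>su(k+1,k)\<close>\<close>

text \<open>Indices run over \<open>{0..2k}\<close> and \<open>a\<close> is mirrored to \<open>2k - a\<close>. With \<open>r = 1/\<surd>2\<close>, on the plane
  spanned by \<open>e\<^sub>j, e\<^sub>2\<^sub>k\<^sub>-\<^sub>j\<close> (\<open>j < k\<close>) the matrix \<open>ipq_to_antidiag k\<close> acts as \<open>[[r,r],[r,-r]]\<close>, which turns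
  \<open>I\<^sub>k\<^sub>+\<^sub>1\<^sub>,\<^sub>k\<close> into the antidiagonal form, and \<open>rot k\<close> acts as \<open>[[r,ir],[ir,r]]\<close>, which commutes
  with it; both fix \<open>e\<^sub>k\<close>.\<close>

definition antidiag :: "nat \<Rightarrow> cmat" where
  "antidiag k = (\<lambda>i j. if i < Suc (2*k) \<and> j < Suc (2*k) \<and> j = 2*k - i then 1 else 0)"

definition su_anti :: "nat \<Rightarrow> cmat set" where
  "su_anti k = su_form (Suc (2*k)) (antidiag k)"

definition inv_sqrt2 :: complex where
  "inv_sqrt2 = complex_of_real (sqrt 2 / 2)"

definition ipq_to_antidiag :: "nat \<Rightarrow> cmat" where
  "ipq_to_antidiag k = (\<lambda>i j. if i < Suc (2*k) \<and> j < Suc (2*k) then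
     (if i = j then (if i = k then 1 else if i < k then inv_sqrt2 else - inv_sqrt2)
      else if j = 2*k - i then inv_sqrt2 else 0) else 0)"

definition rot :: "nat \<Rightarrow> cmat" where
  "rot k = (\<lambda>i j. if i < Suc (2*k) \<and> j < Suc (2*k) then
     (if i = j then (if i = k then 1 else inv_sqrt2) else if j = 2*k - i then \<i> * inv_sqrt2 else 0) else 0)"

definition rot_inv :: "nat \<Rightarrow> cmat" where
  "rot_inv k = (\<lambda>i j. if i < Suc (2*k) \<and> j < Suc (2*k) then
     (if i = j then (if i = k then 1 else inv_sqrt2) else if j = 2*k - i then - \<i> * inv_sqrt2 else 0) else 0)"

lemma inv_sqrt2_sq: "inv_sqrt2 * (inv_sqrt2 * x) = x / 2"
proof -
  have "sqrt 2 / 2 * (sqrt 2 / 2) = (1/2::real)" by (simp add: field_simps)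
  then have "inv_sqrt2 * inv_sqrt2 = 1/2"
    unfolding inv_sqrt2_def by (metis of_real_divide of_real_mult of_real_numeral of_real_1)
  then show ?thesis by (metis mult.assoc mult.commute times_divide_eq_right mult.right_neutral)
qed

lemma cnj_inv_sqrt2 [simp]: "cnj inv_sqrt2 = inv_sqrt2"
  unfolding inv_sqrt2_def by simp

lemma sum_mirror_pair:
  fixes f :: "nat \<Rightarrow> complex"
  assumes a: "a < Suc (2*k)" and f: "\<And>l. l < Suc (2*k) \<Longrightarrow> l \<noteq> a \<Longrightarrow> l \<noteq> 2*k - a \<Longrightarrow> f l = 0"
  shows "(\<Sum>l<Suc (2*k). f l) = (if a = k then f a else f a + f (2*k - a))"
proof -
  have "(\<Sum>l<Suc (2*k). f l) = (\<Sum>l\<in>{a, 2*k - a}. f l)"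
    by (rule sum.mono_neutral_right) (use a f in auto)
  also have "\<dots> = (if a = k then f a else f a + f (2*k - a))"
    using a by (cases "a = k") auto
  finally show ?thesis .
qed

lemma mmul_antidiag_left:
  "mmul (Suc (2*k)) (antidiag k) X a b = (if a < Suc (2*k) then X (2*k - a) b else 0)"
proof (cases "a < Suc (2*k)")
  case True
  show ?thesis unfolding mmul_def using True
    by (subst sum_mirror_pair[OF True]) (auto simp: antidiag_def True)
qed (simp add: mmul_def antidiag_def)

lemma mmul_antidiag_right:
  "mmul (Suc (2*k)) X (antidiag k) a b = (if b < Suc (2*k) then X a (2*k - b) else 0)"
proof (cases "b < Suc (2*k)")
  case True
  moreover have "2*k - (2*k - b) = b" using True by simp
  ultimately show ?thesis unfolding mmul_def
    by (subst sum_mirror_pair[OF True]) (auto simp: antidiag_def)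
qed (simp add: mmul_def antidiag_def)

lemma mmul_ipq_to_antidiag_left:
  "mmul (Suc (2*k)) (ipq_to_antidiag k) X a b = (if a < Suc (2*k) then
     (if a = k then X a b else if a < k then inv_sqrt2 * X a b + inv_sqrt2 * X (2*k - a) b
      else inv_sqrt2 * X (2*k - a) b - inv_sqrt2 * X a b) else 0)"
proof (cases "a < Suc (2*k)")
  case True
  show ?thesis unfolding mmul_def using True
    by (subst sum_mirror_pair[OF True]) (auto simp: ipq_to_antidiag_def True)
qed (simp add: mmul_def ipq_to_antidiag_def)

lemma mmul_rot_left:
  "mmul (Suc (2*k)) (rot k) X a b = (if a < Suc (2*k) then
     (if a = k then X a b else inv_sqrt2 * X a b + \<i> * inv_sqrt2 * X (2*k - a) b) else 0)"
proof (cases "a < Suc (2*k)")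
  case True
  show ?thesis unfolding mmul_def using True
    by (subst sum_mirror_pair[OF True]) (auto simp: rot_def True)
qed (simp add: mmul_def rot_def)

lemma mmul_rot_inv_left:
  "mmul (Suc (2*k)) (rot_inv k) X a b = (if a < Suc (2*k) then
     (if a = k then X a b else inv_sqrt2 * X a b - \<i> * inv_sqrt2 * X (2*k - a) b) else 0)"
proof (cases "a < Suc (2*k)")
  case True
  show ?thesis unfolding mmul_def using True
    by (subst sum_mirror_pair[OF True]) (auto simp: rot_inv_def True)
qed (simp add: mmul_def rot_inv_def)

lemma mmul_rot_inv_right:
  "mmul (Suc (2*k)) X (rot_inv k) a b = (if b < Suc (2*k) then
     (if b = k then X a b else inv_sqrt2 * X a b - \<i> * inv_sqrt2 * X a (2*k - b)) else 0)"
proof (cases "b < Suc (2*k)")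
  case True
  moreover have "2*k - (2*k - b) = b" using True by simp
  ultimately show ?thesis unfolding mmul_def
    by (subst sum_mirror_pair[OF True]) (auto simp: rot_inv_def)
qed (simp add: mmul_def rot_inv_def)

lemma mmul_Ipq_mirror_left:
  "mmul (Suc (2*k)) (Ipq (Suc k) k) X a b = (if a < Suc (2*k) then ipq_sign (Suc k) a * X a b else 0)"
  using mmul_Ipq_left[of "Suc k" k X a b] by (simp add: mult_2)

lemma msupp_model_matrices:
  "msupp (Suc (2*k)) (antidiag k)" "msupp (Suc (2*k)) (ipq_to_antidiag k)"
  "msupp (Suc (2*k)) (rot k)" "msupp (Suc (2*k)) (rot_inv k)"
  unfolding msupp_def antidiag_def ipq_to_antidiag_def rot_def rot_inv_def by auto

lemma inverse_pair_ipq_to_antidiag: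
  "inverse_pair (Suc (2*k)) (ipq_to_antidiag k) (ipq_to_antidiag k)"
proof -
  have "mmul (Suc (2*k)) (ipq_to_antidiag k) (ipq_to_antidiag k) = mid (Suc (2*k))"
    by (intro cmat_eqI, unfold mmul_ipq_to_antidiag_left mid_def)
      (auto simp: ipq_to_antidiag_def algebra_simps inv_sqrt2_sq)
  then show ?thesis
    unfolding inverse_pair_def using msupp_model_matrices by simp
qed

lemma inverse_pair_rot: "inverse_pair (Suc (2*k)) (rot k) (rot_inv k)"
proof -
  have "mmul (Suc (2*k)) (rot k) (rot_inv k) = mid (Suc (2*k))"
    by (intro cmat_eqI, unfold mmul_rot_left mid_def) (auto simp: rot_inv_def algebra_simps inv_sqrt2_sq)
  moreover have "mmul (Suc (2*k)) (rot_inv k) (rot k) = mid (Suc (2*k))"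
    by (intro cmat_eqI, unfold mmul_rot_inv_left mid_def) (auto simp: rot_def algebra_simps inv_sqrt2_sq)
  ultimately show ?thesis
    unfolding inverse_pair_def using msupp_model_matrices by simp
qed

lemma madj_ipq_to_antidiag: "madj (ipq_to_antidiag k) = ipq_to_antidiag k"
  unfolding madj_def ipq_to_antidiag_def by (intro ext) auto

lemma madj_rot: "madj (rot k) = rot_inv k" and madj_rot_inv: "madj (rot_inv k) = rot k"
  unfolding madj_def rot_def rot_inv_def by (intro ext; auto)+

lemma ipq_to_antidiag_intertwines:
  "mmul (Suc (2*k)) (ipq_to_antidiag k) (Ipq (Suc k) k) = mmul (Suc (2*k)) (antidiag k) (ipq_to_antidiag k)"
  "mmul (Suc (2*k)) (Ipq (Suc k) k) (ipq_to_antidiag k) = mmul (Suc (2*k)) (ipq_to_antidiag k) (antidiag k)"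
  by (intro cmat_eqI, unfold mmul_ipq_to_antidiag_left mmul_antidiag_left mmul_Ipq_mirror_left;
      auto simp: ipq_sign_def ipq_to_antidiag_def antidiag_def Ipq_def)+

lemma rot_commutes_antidiag:
  "mmul (Suc (2*k)) (rot k) (antidiag k) = mmul (Suc (2*k)) (antidiag k) (rot k)"
  "mmul (Suc (2*k)) (rot_inv k) (antidiag k) = mmul (Suc (2*k)) (antidiag k) (rot_inv k)"
  by (intro cmat_eqI, unfold mmul_rot_left mmul_rot_inv_left mmul_antidiag_left;
      auto simp: rot_def rot_inv_def antidiag_def)+

lemma lie_conjugation_ipq_to_antidiag:
  "lie_conjugation (Suc (2*k)) (su_anti k) (su_pq (Suc k) k) (ipq_to_antidiag k) (ipq_to_antidiag k)"
proof -
  have su_pq: "su_pq (Suc k) k = su_form (Suc (2*k)) (Ipq (Suc k) k)"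
    using su_pq_eq_su_form[of "Suc k" k] by (simp add: mult_2)
  show ?thesis
    unfolding lie_conjugation_def lie_conjugation_axioms_def su_pq su_anti_def
    using lie_subalgebra_su_form inverse_pair_ipq_to_antidiag
      mconj_su_form[OF inverse_pair_ipq_to_antidiag[of k], of "Ipq (Suc k) k" "antidiag k"]
      mconj_su_form[OF inverse_pair_ipq_to_antidiag[of k], of "antidiag k" "Ipq (Suc k) k"]
    by (simp add: madj_ipq_to_antidiag ipq_to_antidiag_intertwines)
qed

lemma lie_conjugation_rot:
  "lie_conjugation (Suc (2*k)) (su_anti k) (su_anti k) (rot k) (rot_inv k)"
  unfolding lie_conjugation_def lie_conjugation_axioms_def su_anti_def
  using lie_subalgebra_su_form inverse_pair_rot
    mconj_su_form[OF inverse_pair_rot[of k], of "antidiag k" "antidiag k"]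
    mconj_su_form[OF inverse_pair_sym[OF inverse_pair_rot[of k]], of "antidiag k" "antidiag k"]
  by (simp add: madj_rot madj_rot_inv rot_commutes_antidiag)

lemma lie_subalgebra_su_anti: "lie_subalgebra (Suc (2*k)) (su_anti k)"
  unfolding su_anti_def by (rule lie_subalgebra_su_form)

section \<open>Cartan coordinates\<close>

lemma su_anti_entry:
  assumes X: "X \<in> su_anti k" and a: "a < Suc (2*k)" and b: "b < Suc (2*k)"
  shows "X a b = - cnj (X (2*k - b) (2*k - a))"
proof -
  have "(mmul (Suc (2*k)) (madj X) (antidiag k) + mmul (Suc (2*k)) (antidiag k) X) (2*k - a) b = 0"
    using X unfolding su_anti_def su_form_def by simp
  then have "cnj (X (2*k - b) (2*k - a)) + X a b = 0"
    using a b by (simp add: mmul_antidiag_left mmul_antidiag_right madj_def less_Suc_eq_le)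
  then show ?thesis by (simp add: eq_neg_iff_add_eq_0 add.commute)
qed

lemma su_anti_msupp: "X \<in> su_anti k \<Longrightarrow> msupp (Suc (2*k)) X"
  unfolding su_anti_def su_form_def by simp

lemma su_anti_outside: "X \<in> su_anti k \<Longrightarrow> Suc (2*k) \<le> a \<or> Suc (2*k) \<le> b \<Longrightarrow> X a b = 0"
  using su_anti_msupp unfolding msupp_def by blast

lemma sum_mirror_split:
  fixes f :: "nat \<Rightarrow> complex"
  shows "(\<Sum>a<Suc (2*k). f a) = (\<Sum>j<k. f j + f (2*k - j)) + f k"
proof -
  have split: "{..<Suc (2*k)} = {..<k} \<union> {k} \<union> (\<lambda>j. 2*k - j) ` {..<k}"
  proof (intro set_eqI iffI)
    fix x assume "x \<in> {..<Suc (2*k)}"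
    then have "x < k \<or> x = k \<or> (x = 2*k - (2*k - x) \<and> 2*k - x < k)" by auto
    then show "x \<in> {..<k} \<union> {k} \<union> (\<lambda>j. 2*k - j) ` {..<k}" by blast
  qed auto
  have "inj_on (\<lambda>j. 2*k - j) {..<k}" by (auto simp: inj_on_def)
  then have "(\<Sum>a<Suc (2*k). f a) = (\<Sum>j<k. f j) + f k + (\<Sum>j<k. f (2*k - j))"
    unfolding split by (subst sum.union_disjoint) (auto simp: sum.reindex)
  then show ?thesis by (simp add: sum.distrib)
qed

text \<open>The diagonal of an element of \<open>su_anti k\<close> in terms of \<open>2k\<close> real coordinates: \<open>p\<^sub>j + i q\<^sub>j\<close>
  at \<open>j < k\<close>, \<open>-p\<^sub>j + i q\<^sub>j\<close> at \<open>2k - j\<close>, and at \<open>k\<close> the entry forced by the trace condition.\<close>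

definition cartan :: "nat \<Rightarrow> (nat \<Rightarrow> real) \<Rightarrow> (nat \<Rightarrow> real) \<Rightarrow> nat \<Rightarrow> complex" where
  "cartan k p q a = (if a < k then Complex (p a) (q a)
     else if a = k then Complex 0 (-2 * (\<Sum>l<k. q l))
     else Complex (- p (2*k - a)) (q (2*k - a)))"

definition diag_re :: "cmat \<Rightarrow> nat \<Rightarrow> real" where
  "diag_re X j = Re (X j j)"

definition diag_im :: "cmat \<Rightarrow> nat \<Rightarrow> real" where
  "diag_im X j = Im (X j j)"

lemma Re_cartan: "j < k \<Longrightarrow> Re (cartan k p q j) = p j"
  unfolding cartan_def by simp

lemma Im_cartan: "j < k \<Longrightarrow> Im (cartan k p q j) = q j"
  unfolding cartan_def by simp

lemma cartan_cong:
  assumes "\<And>j. j < k \<Longrightarrow> p j = p' j" "\<And>j. j < k \<Longrightarrow> q j = q' j" "a < Suc (2*k)"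
  shows "cartan k p q a = cartan k p' q' a"
  using assms unfolding cartan_def by (auto intro!: sum.cong)

lemma cartan_zero: "cartan k (\<lambda>_. 0) (\<lambda>_. 0) a = 0"
  unfolding cartan_def by (simp add: complex_eq_iff)

lemma cartan_uminus: "cartan k (\<lambda>j. - p j) (\<lambda>j. - q j) a = - cartan k p q a"
  unfolding cartan_def by (auto simp: complex_eq_iff sum_negf)

lemma cartan_lincomb:
  "cartan k (\<lambda>j. c * p j + p' j) (\<lambda>j. c * q j + q' j) a = complex_of_real c * cartan k p q a + cartan k p' q' a"
  unfolding cartan_def by (auto simp: complex_eq_iff sum.distrib sum_distrib_left algebra_simps)

lemma cartan_mirror: "a < Suc (2*k) \<Longrightarrow> cartan k p q (2*k - a) = - cnj (cartan k p q a)"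
  unfolding cartan_def by (auto simp: complex_eq_iff)

lemma sum_cartan: "(\<Sum>a<Suc (2*k). cartan k p q a) = 0"
proof -
  have "cartan k p q j + cartan k p q (2*k - j) = Complex 0 (2 * q j)" if j: "j < k" for j
  proof -
    have "\<not> 2*k - j < k" "2*k - j \<noteq> k" "2*k - (2*k - j) = j" using j by auto
    then show ?thesis using j by (simp add: cartan_def complex_eq_iff)
  qed
  then have "(\<Sum>j<k. cartan k p q j + cartan k p q (2*k - j)) = Complex 0 (2 * (\<Sum>j<k. q j))"
    by (simp add: complex_eq_iff sum_distrib_left)
  then show ?thesis
    unfolding sum_mirror_split by (simp add: cartan_def complex_eq_iff)
qed

lemma sum_cartan_mult:
  "(\<Sum>a<Suc (2*k). cartan k p q a * cartan k p' q' a) =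
    complex_of_real (2 * (\<Sum>j<k. p j * p' j - q j * q' j) - 4 * (\<Sum>j<k. q j) * (\<Sum>j<k. q' j))"
proof -
  have "cartan k p q j * cartan k p' q' j + cartan k p q (2*k - j) * cartan k p' q' (2*k - j)
      = complex_of_real (2 * (p j * p' j - q j * q' j))" if j: "j < k" for j
  proof -
    have "\<not> 2*k - j < k" "2*k - j \<noteq> k" "2*k - (2*k - j) = j" using j by auto
    then show ?thesis using j by (simp add: cartan_def complex_eq_iff algebra_simps)
  qed
  then have "(\<Sum>j<k. cartan k p q j * cartan k p' q' j + cartan k p q (2*k - j) * cartan k p' q' (2*k - j))
      = complex_of_real (2 * (\<Sum>j<k. p j * p' j - q j * q' j))"
    by (simp add: sum_distrib_left)
  then show ?thesis
    unfolding sum_mirror_split by (simp add: cartan_def complex_eq_iff)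
qed

lemma su_anti_diag:
  assumes X: "X \<in> su_anti k" and a: "a < Suc (2*k)"
  shows "X a a = cartan k (diag_re X) (diag_im X) a"
proof -
  have mirror: "X (2*k - j) (2*k - j) = - cnj (X j j)" if "j < Suc (2*k)" for j
    using su_anti_entry[OF X, of "2*k - j" "2*k - j"] that by simp
  have "(\<Sum>j<k. X j j + X (2*k - j) (2*k - j)) + X k k = 0"
    using X unfolding su_anti_def su_form_def mtrace_def sum_mirror_split by simp
  then have "(\<Sum>j<k. Complex 0 (2 * Im (X j j))) + X k k = 0"
    using mirror by (simp add: complex_eq_iff)
  then have "X k k = Complex 0 (-2 * (\<Sum>l<k. diag_im X l))"
    unfolding diag_im_def by (simp add: complex_eq_iff flip: sum_distrib_left)
  then show ?thesis
    using mirror[of "2*k - a"] a unfolding cartan_def diag_re_def diag_im_def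
    by (auto simp: complex_eq_iff)
qed

lemma su_anti_intro:
  assumes Y: "msupp (Suc (2*k)) Y"
    and off: "\<And>a b. a < Suc (2*k) \<Longrightarrow> b < Suc (2*k) \<Longrightarrow> a \<noteq> b \<Longrightarrow> Y a b = - cnj (Y (2*k - b) (2*k - a))"
    and diag: "\<And>a. a < Suc (2*k) \<Longrightarrow> Y a a = cartan k p q a"
  shows "Y \<in> su_anti k"
proof -
  have entry: "Y a b = - cnj (Y (2*k - b) (2*k - a))" if ab: "a < Suc (2*k)" "b < Suc (2*k)" for a b
  proof (cases "a = b")
    case True
    then show ?thesis using ab diag[of a] diag[of "2*k - a"] cartan_mirror[of a k p q] by simp
  qed (rule off[OF ab])
  have "mmul (Suc (2*k)) (madj Y) (antidiag k) + mmul (Suc (2*k)) (antidiag k) Y = 0"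
  proof (rule cmat_eqI)
    fix i j
    show "(mmul (Suc (2*k)) (madj Y) (antidiag k) + mmul (Suc (2*k)) (antidiag k) Y) i j = 0 i j"
      using entry[of "2*k - i" j] Y
      by (auto simp: mmul_antidiag_left mmul_antidiag_right madj_def msupp_def)
  qed
  moreover have "mtrace (Suc (2*k)) Y = 0"
    unfolding mtrace_def using diag sum_cartan by simp
  ultimately show ?thesis
    unfolding su_anti_def su_form_def using Y by simp
qed

definition shear :: "nat \<Rightarrow> real \<Rightarrow> (nat \<Rightarrow> real) \<Rightarrow> nat \<Rightarrow> real" where
  "shear k c v j = v j + c * (\<Sum>l<k. v l)"

lemma sum_shear: "(\<Sum>j<k. shear k c v j) = (1 + real k * c) * (\<Sum>j<k. v j)"
  unfolding shear_def by (simp add: sum.distrib algebra_simps)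

lemma shear_shear: "shear k c (shear k c' v) j = shear k (c + c' + real k * c * c') v j"
  unfolding shear_def[of k c] sum_shear unfolding shear_def by (simp add: algebra_simps)

lemma shear_cong: "(\<And>l. l < k \<Longrightarrow> v l = w l) \<Longrightarrow> j < k \<Longrightarrow> shear k c v j = shear k c w j"
  unfolding shear_def by auto

lemma sum_shear_mult:
  "(\<Sum>j<k. shear k c v j * shear k c w j) =
    (\<Sum>j<k. v j * w j) + (2 * c + real k * c * c) * (\<Sum>j<k. v j) * (\<Sum>j<k. w j)"
proof -
  define S S' where "S = (\<Sum>j<k. v j)" and "S' = (\<Sum>j<k. w j)"
  have "(\<Sum>j<k. shear k c v j * shear k c w j) = (\<Sum>j<k. (v j + c * S) * (w j + c * S'))"
    unfolding shear_def S_def S'_def ..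
  also have "\<dots> = (\<Sum>j<k. v j * w j) + c * S * (\<Sum>j<k. w j) + c * S' * (\<Sum>j<k. v j) + real k * c * c * S * S'"
    by (simp add: algebra_simps sum.distrib sum_distrib_left sum_distrib_right)
  finally show ?thesis
    unfolding S_def[symmetric] S'_def[symmetric] by (simp add: algebra_simps)
qed

text \<open>The shear parameters satisfy \<open>1 + k c_re = \<surd>(2k+1)\<close> and \<open>1 + k c_im = 1/\<surd>(2k+1)\<close>; these are
  exactly the values for which the coordinate swap defining \<open>J\<^sub>1\<close> below is an involutive
  anti-isometry of the trace form on the diagonal.\<close>

definition c_re :: "nat \<Rightarrow> real" where
  "c_re k = (sqrt (2 * k + 1) - 1) / k"

definition c_im :: "nat \<Rightarrow> real" where
  "c_im k = (1 / sqrt (2 * k + 1) - 1) / k"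

lemma k_c_re: "0 < k \<Longrightarrow> real k * c_re k = sqrt (2 * k + 1) - 1"
  unfolding c_re_def by simp

lemma k_c_im: "0 < k \<Longrightarrow> real k * c_im k = 1 / sqrt (2 * k + 1) - 1"
  unfolding c_im_def by simp

lemma c_re_c_im:
  assumes k: "0 < k"
  shows "c_re k + c_im k + real k * c_re k * c_im k = 0"
proof -
  have "real k * (c_re k + c_im k + real k * c_re k * c_im k)
      = real k * c_re k + real k * c_im k + (real k * c_re k) * (real k * c_im k)"
    by (simp add: algebra_simps)
  also have "\<dots> = 0"
    unfolding k_c_re[OF k] k_c_im[OF k] by (simp add: field_simps)
  finally show ?thesis using k by simp
qed

lemma c_re_square:
  assumes k: "0 < k"
  shows "2 * c_re k + real k * c_re k * c_re k = 2"
proof -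
  have "real k * (2 * c_re k + real k * c_re k * c_re k) = (real k * c_re k + 1) * (real k * c_re k + 1) - 1"
    by (simp add: algebra_simps)
  also have "\<dots> = 2 * real k"
    unfolding k_c_re[OF k] by simp
  finally show ?thesis using k by simp
qed

lemma c_im_square:
  assumes k: "0 < k"
  shows "2 * c_im k + real k * c_im k * c_im k = - 2 * (1 + real k * c_im k) * (1 + real k * c_im k)"
proof -
  have "real k * (2 * c_im k + real k * c_im k * c_im k + 2 * (1 + real k * c_im k) * (1 + real k * c_im k))
      = (2 * real k + 1) * ((real k * c_im k + 1) * (real k * c_im k + 1)) - 1"
    by (simp add: algebra_simps)
  also have "\<dots> = 0"
    unfolding k_c_im[OF k] by simp
  finally have "2 * c_im k + real k * c_im k * c_im k + 2 * (1 + real k * c_im k) * (1 + real k * c_im k) = 0"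
    using k by simp
  then show ?thesis by (simp add: algebra_simps)
qed

lemma shear_zero: "shear k 0 v j = v j"
  unfolding shear_def by simp

lemma shear_lincomb: "shear k c (\<lambda>j. a * v j + w j) = (\<lambda>j. a * shear k c v j + shear k c w j)"
  unfolding shear_def by (simp add: sum.distrib sum_distrib_left algebra_simps)

lemma shear_inverse: "0 < k \<Longrightarrow> shear k (c_re k) (shear k (c_im k) v) j = v j"
  "0 < k \<Longrightarrow> shear k (c_im k) (shear k (c_re k) v) j = v j"
  using c_re_c_im[of k] by (simp_all add: shear_shear shear_zero algebra_simps)

lemma shear_uminus: "shear k c (\<lambda>j. - v j) = (\<lambda>j. - shear k c v j)"
  unfolding shear_def by (simp add: sum_negf)

section \<open>The product structure \<open>J\<^sub>1\<close>\<close>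

text \<open>The \<open>\<plusminus>1\<close>-eigenspaces of \<open>J\<^sub>1\<close> are the upper and the lower triangular matrices whose diagonal lies
  in the corresponding eigenspace of the sheared coordinate swap; both are subalgebras.\<close>

abbreviation J1_re :: "nat \<Rightarrow> cmat \<Rightarrow> nat \<Rightarrow> real" where
  "J1_re k X \<equiv> shear k (c_re k) (diag_im X)"

abbreviation J1_im :: "nat \<Rightarrow> cmat \<Rightarrow> nat \<Rightarrow> real" where
  "J1_im k X \<equiv> shear k (c_im k) (diag_re X)"

definition J1_model :: "nat \<Rightarrow> cmat \<Rightarrow> cmat" where
  "J1_model k X = (\<lambda>a b. if a < Suc (2*k) \<and> b < Suc (2*k) then
      (if a < b then X a b else if b < a then - X a b else cartan k (J1_re k X) (J1_im k X) a) else 0)"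

lemma diag_re_J1_model: "j < k \<Longrightarrow> diag_re (J1_model k X) j = J1_re k X j"
  unfolding diag_re_def J1_model_def by (simp add: Re_cartan)

lemma diag_im_J1_model: "j < k \<Longrightarrow> diag_im (J1_model k X) j = J1_im k X j"
  unfolding diag_im_def J1_model_def by (simp add: Im_cartan)

lemma J1_model_mem: "X \<in> su_anti k \<Longrightarrow> J1_model k X \<in> su_anti k"
proof (rule su_anti_intro)
  show "msupp (Suc (2*k)) (J1_model k X)"
    unfolding msupp_def J1_model_def by auto
next
  fix a b assume "X \<in> su_anti k" "a < Suc (2*k)" "b < Suc (2*k)" "a \<noteq> b"
  then show "J1_model k X a b = - cnj (J1_model k X (2*k - b) (2*k - a))"
    using su_anti_entry[of X k a b] unfolding J1_model_def by auto
qed (simp add: J1_model_def)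

lemma J1_model_lincomb: "J1_model k (msc c X + Y) = msc c (J1_model k X) + J1_model k Y"
proof -
  have "diag_re (msc c X + Y) = (\<lambda>j. c * diag_re X j + diag_re Y j)"
    "diag_im (msc c X + Y) = (\<lambda>j. c * diag_im X j + diag_im Y j)"
    unfolding diag_re_def diag_im_def msc_def by auto
  then show ?thesis
    unfolding J1_model_def by (simp only: shear_lincomb cartan_lincomb) (simp add: fun_eq_iff msc_def)
qed

lemma lin_endo_J1_model: "lin_endo (su_anti k) (J1_model k)"
  unfolding lin_endo_def using J1_model_mem J1_model_lincomb by blast

lemma J1_model_offdiag:
  "a \<noteq> b \<Longrightarrow> J1_model k X a b = (if a < Suc (2*k) \<and> b < Suc (2*k) then (if a < b then X a b else - X a b) else 0)"
  unfolding J1_model_def by auto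

lemma J1_model_diag:
  "a < Suc (2*k) \<Longrightarrow> J1_model k X a a = cartan k (J1_re k X) (J1_im k X) a"
  unfolding J1_model_def by simp

lemma J1_re_J1_model:
  assumes k: "0 < k" and j: "j < k"
  shows "J1_re k (J1_model k X) j = diag_re X j"
proof -
  have "J1_re k (J1_model k X) j = shear k (c_re k) (J1_im k X) j"
    by (rule shear_cong) (simp_all add: diag_im_J1_model j)
  then show ?thesis using shear_inverse(1)[OF k] by simp
qed

lemma J1_im_J1_model:
  assumes k: "0 < k" and j: "j < k"
  shows "J1_im k (J1_model k X) j = diag_im X j"
proof -
  have "J1_im k (J1_model k X) j = shear k (c_im k) (J1_re k X) j"
    by (rule shear_cong) (simp_all add: diag_re_J1_model j)
  then show ?thesis using shear_inverse(2)[OF k] by simp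
qed

lemma J1_model_involutive:
  assumes X: "X \<in> su_anti k" and k: "0 < k"
  shows "J1_model k (J1_model k X) = X"
proof (rule cmat_eqI)
  fix a b
  show "J1_model k (J1_model k X) a b = X a b"
  proof (cases "a = b")
    case True
    then show ?thesis
      using J1_model_diag cartan_cong[OF J1_re_J1_model[OF k] J1_im_J1_model[OF k]]
        su_anti_diag[OF X] su_anti_outside[OF X]
      by (cases "a < Suc (2*k)") (auto simp: J1_model_def)
  next
    case False
    then show ?thesis using su_anti_outside[OF X] by (auto simp: J1_model_offdiag)
  qed
qed

lemma sum_sum_split_diag:
  fixes f :: "nat \<Rightarrow> nat \<Rightarrow> complex"
  shows "(\<Sum>a<n. \<Sum>b<n. f a b) = (\<Sum>a<n. f a a) + (\<Sum>a<n. \<Sum>b\<in>{..<n} - {a}. f a b)"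
proof -
  have "(\<Sum>b<n. f a b) = f a a + (\<Sum>b\<in>{..<n} - {a}. f a b)" if "a < n" for a
    using that by (subst sum.remove[of _ a]) auto
  then show ?thesis by (simp add: sum.distrib)
qed

lemma quadratic_cartan_J1:
  assumes k: "0 < k"
  shows "2 * (\<Sum>j<k. shear k (c_re k) v j * shear k (c_re k) v' j - shear k (c_im k) u j * shear k (c_im k) u' j)
      - 4 * (\<Sum>j<k. shear k (c_im k) u j) * (\<Sum>j<k. shear k (c_im k) u' j)
    = - (2 * (\<Sum>j<k. u j * u' j - v j * v' j) - 4 * (\<Sum>j<k. v j) * (\<Sum>j<k. v' j))"
  unfolding sum_subtractf sum_shear_mult sum_shear c_re_square[OF k] c_im_square[OF k]
  by (simp add: algebra_simps)

lemma J1_model_anti_isometry: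
  assumes X: "X \<in> su_anti k" and Y: "Y \<in> su_anti k" and k: "0 < k"
  shows "Bform (Suc (2*k)) (J1_model k X) (J1_model k Y) = - Bform (Suc (2*k)) X Y"
proof -
  let ?n = "Suc (2*k)"
  have off: "(\<Sum>a<?n. \<Sum>b\<in>{..<?n} - {a}. J1_model k X a b * J1_model k Y b a)
      = (\<Sum>a<?n. \<Sum>b\<in>{..<?n} - {a}. - (X a b * Y b a))"
    by (intro sum.cong) (auto simp: J1_model_def)
  have "(\<Sum>a<?n. J1_model k X a a * J1_model k Y a a)
      = (\<Sum>a<?n. cartan k (J1_re k X) (J1_im k X) a * cartan k (J1_re k Y) (J1_im k Y) a)"
    unfolding J1_model_def by simp
  also have "\<dots> = - (\<Sum>a<?n. cartan k (diag_re X) (diag_im X) a * cartan k (diag_re Y) (diag_im Y) a)"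
    by (simp only: sum_cartan_mult quadratic_cartan_J1[OF k] of_real_minus)
  also have "\<dots> = - (\<Sum>a<?n. X a a * Y a a)"
    using su_anti_diag[OF X] su_anti_diag[OF Y] by simp
  finally have diag: "(\<Sum>a<?n. J1_model k X a a * J1_model k Y a a) = - (\<Sum>a<?n. X a a * Y a a)" .
  show ?thesis
    unfolding Bform_sum sum_sum_split_diag[of "\<lambda>a b. J1_model k X a b * J1_model k Y b a"]
      sum_sum_split_diag[of "\<lambda>a b. X a b * Y b a"] diag off sum_negf
    by (simp only: minus_add_distrib minus_divide_left)
qed

lemma brk_upper_triangular:
  assumes X: "\<And>a b. b < a \<Longrightarrow> X a b = 0" and Y: "\<And>a b. b < a \<Longrightarrow> Y a b = 0" and ba: "b \<le> a"
  shows "brk n X Y a b = 0"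
proof (cases "b < a")
  case True
  have "mmul n X Y a b = 0" "mmul n Y X a b = 0" unfolding mmul_def
    using X Y True by (auto intro!: sum.neutral) (metis not_less_iff_gr_or_eq order.strict_trans)+
  then show ?thesis unfolding brk_def by simp
next
  case False
  then have b: "b = a" using ba by simp
  have "mmul n X Y a a = (if a < n then X a a * Y a a else 0)"
    "mmul n Y X a a = (if a < n then Y a a * X a a else 0)"
    unfolding mmul_def by (rule sum_single, metis X Y linorder_neqE_nat mult_eq_0_iff)+
  then show ?thesis unfolding brk_def b by simp
qed

lemma brk_lower_triangular:
  assumes X: "\<And>a b. a < b \<Longrightarrow> X a b = 0" and Y: "\<And>a b. a < b \<Longrightarrow> Y a b = 0" and ab: "a \<le> b"
  shows "brk n X Y a b = 0"
proof (cases "a < b")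
  case True
  have "mmul n X Y a b = 0" "mmul n Y X a b = 0" unfolding mmul_def
    using X Y True by (auto intro!: sum.neutral) (metis not_less_iff_gr_or_eq order.strict_trans)+
  then show ?thesis unfolding brk_def by simp
next
  case False
  then have b: "b = a" using ab by simp
  have "mmul n X Y a a = (if a < n then X a a * Y a a else 0)"
    "mmul n Y X a a = (if a < n then Y a a * X a a else 0)"
    unfolding mmul_def by (rule sum_single, metis X Y linorder_neqE_nat mult_eq_0_iff)+
  then show ?thesis unfolding brk_def b by simp
qed

lemma J1_model_fixed:
  assumes X: "X \<in> su_anti k" and ba: "b < a"
  shows "J1_model k X = X \<Longrightarrow> X a b = 0" and "J1_model k X = - X \<Longrightarrow> X b a = 0"
proof -
  show "X a b = 0" if "J1_model k X = X"
  proof -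
    have "J1_model k X a b = X a b" using that by simp
    then show ?thesis using ba su_anti_outside[OF X, of a b] by (auto simp: J1_model_offdiag split: if_splits)
  qed
  show "X b a = 0" if "J1_model k X = - X"
  proof -
    have "J1_model k X b a = - X b a" using that by simp
    then show ?thesis using ba su_anti_outside[OF X, of b a] by (auto simp: J1_model_offdiag split: if_splits)
  qed
qed

lemma J1_model_triangular:
  assumes Z: "msupp (Suc (2*k)) Z"
  shows "(\<And>a b. b \<le> a \<Longrightarrow> Z a b = 0) \<Longrightarrow> J1_model k Z = Z"
    and "(\<And>a b. a \<le> b \<Longrightarrow> Z a b = 0) \<Longrightarrow> J1_model k Z = - Z"
proof -
  have diag0: "J1_model k Z a a = 0" if "\<And>a. Z a a = 0" for a
    using that cartan_zero[of k a] unfolding J1_model_def diag_re_def diag_im_def shear_def by simp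
  show "J1_model k Z = Z" if up: "\<And>a b. b \<le> a \<Longrightarrow> Z a b = 0"
  proof (rule cmat_eqI)
    fix i j
    show "J1_model k Z i j = Z i j"
      using up[of i i] up[of j i] diag0 up Z by (cases "i = j") (auto simp: J1_model_offdiag msupp_def)
  qed
  show "J1_model k Z = - Z" if low: "\<And>a b. a \<le> b \<Longrightarrow> Z a b = 0"
  proof (rule cmat_eqI)
    fix i j
    show "J1_model k Z i j = (- Z) i j"
      using low[of i i] low[of i j] diag0 low Z by (cases "i = j") (auto simp: J1_model_offdiag msupp_def)
  qed
qed

lemma J1_model_integrable:
  assumes k: "0 < k" and X: "X \<in> su_anti k" and Y: "Y \<in> su_anti k"
  shows "nijenhuis (Suc (2*k)) (J1_model k) X Y = 0"
proof (rule lie_subalgebra.product_structure_integrable[OF _ lin_endo_J1_model _ _ _ X Y])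
  show "lie_subalgebra (Suc (2*k)) (su_anti k)"
    by (rule lie_subalgebra_su_anti)
  show "J1_model k (J1_model k X) = X" if "X \<in> su_anti k" for X
    using J1_model_involutive[OF that k] .
  fix X Y assume XY: "X \<in> su_anti k" "Y \<in> su_anti k"
  have B: "msupp (Suc (2*k)) (brk (Suc (2*k)) X Y)"
    using XY by (simp add: msupp_brk su_anti_msupp)
  show "J1_model k (brk (Suc (2*k)) X Y) = brk (Suc (2*k)) X Y"
    if "J1_model k X = X" "J1_model k Y = Y"
    using J1_model_triangular(1)[OF B] brk_upper_triangular J1_model_fixed(1)[OF XY(1)]
      J1_model_fixed(1)[OF XY(2)] that by blast
  show "J1_model k (brk (Suc (2*k)) X Y) = - brk (Suc (2*k)) X Y"
    if "J1_model k X = - X" "J1_model k Y = - Y"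
    using J1_model_triangular(2)[OF B] brk_lower_triangular J1_model_fixed(2)[OF XY(1)]
      J1_model_fixed(2)[OF XY(2)] that by blast
qed

section \<open>The product structure \<open>J\<^sub>2\<close>\<close>

abbreviation rot_conj :: "nat \<Rightarrow> cmat \<Rightarrow> cmat" where
  "rot_conj k X \<equiv> mconj (Suc (2*k)) (rot k) (rot_inv k) X"

lemma rot_conj_entry: "rot_conj k X a b = (if a < Suc (2*k) \<and> b < Suc (2*k) then
   (if a = k then (if b = k then X a b else inv_sqrt2 * X a b - \<i> * inv_sqrt2 * X a (2*k - b))
    else if b = k then inv_sqrt2 * X a b + \<i> * inv_sqrt2 * X (2*k - a) b
    else (X a b + \<i> * X (2*k - a) b - \<i> * X a (2*k - b) + X (2*k - a) (2*k - b)) / 2) else 0)"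
  unfolding mconj_def mmul_rot_inv_right mmul_rot_left
  by (auto simp: algebra_simps inv_sqrt2_sq add_divide_distrib diff_divide_distrib)

definition layer :: "nat \<Rightarrow> nat \<Rightarrow> nat" where
  "layer k a = min a (2*k - a)"

lemma mirror_regions:
  fixes a b k :: nat
  assumes "a \<le> 2*k" "b \<le> 2*k"
  obtains (row_upper) "a < k" "a < b" "b < 2*k - a"
    | (row_lower) "k < a" "2*k - a < b" "b < a"
    | (col_left) "b < k" "b < a" "a < 2*k - b"
    | (col_right) "k < b" "2*k - b < a" "a < b"
    | (diag) "a = b"
    | (anti_upper) "a < k" "b = 2*k - a"
    | (anti_lower) "b < k" "a = 2*k - b"
proof -
  have "(a < k \<and> a < b \<and> a + b < 2*k) \<or> (k < a \<and> 2*k < a + b \<and> b < a)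
    \<or> (b < k \<and> b < a \<and> a + b < 2*k) \<or> (k < b \<and> 2*k < a + b \<and> a < b)
    \<or> a = b \<or> (a < k \<and> a + b = 2*k) \<or> (b < k \<and> a + b = 2*k)"
    by linarith
  then show ?thesis
  proof (elim disjE)
    assume "a < k \<and> a < b \<and> a + b < 2*k" then show ?thesis using row_upper by auto
  next
    assume "k < a \<and> 2*k < a + b \<and> b < a" then show ?thesis using row_lower assms by auto
  next
    assume "b < k \<and> b < a \<and> a + b < 2*k" then show ?thesis using col_left by auto
  next
    assume "k < b \<and> 2*k < a + b \<and> a < b" then show ?thesis using col_right assms by auto
  next
    assume "a = b" then show ?thesis using diag by auto
  next
    assume "a < k \<and> a + b = 2*k" then show ?thesis using anti_upper by auto
  next
    assume "b < k \<and> a + b = 2*k" then show ?thesis using anti_lower by auto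
  qed
qed

definition anti_up :: "nat \<Rightarrow> cmat \<Rightarrow> nat \<Rightarrow> real" where
  "anti_up k X j = Im (X j (2*k - j))"

definition anti_low :: "nat \<Rightarrow> cmat \<Rightarrow> nat \<Rightarrow> real" where
  "anti_low k X j = Im (X (2*k - j) j)"

definition anti_mean :: "nat \<Rightarrow> cmat \<Rightarrow> nat \<Rightarrow> real" where
  "anti_mean k X j = (anti_up k X j + anti_low k X j) / 2"

definition anti_skew :: "nat \<Rightarrow> cmat \<Rightarrow> nat \<Rightarrow> real" where
  "anti_skew k X j = (anti_low k X j - anti_up k X j) / 2"

abbreviation J2_im :: "nat \<Rightarrow> cmat \<Rightarrow> nat \<Rightarrow> real" where
  "J2_im k X \<equiv> shear k (c_im k) (anti_skew k X)"

text \<open>An explicit formula for the conjugate of \<open>J\<^sub>1\<close> by \<open>rot k\<close> (see \<open>J2_model_eq_conj_endo\<close>).\<close>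

definition J2_model :: "nat \<Rightarrow> cmat \<Rightarrow> cmat" where
  "J2_model k X = (\<lambda>a b. if a < Suc (2*k) \<and> b < Suc (2*k) then
     (if layer k a < layer k b then (if a < k then - \<i> * X (2*k - a) b else \<i> * X (2*k - a) b)
      else if layer k b < layer k a then (if b < k then - \<i> * X a (2*k - b) else \<i> * X a (2*k - b))
      else if a = b then cartan k (anti_mean k X) (J2_im k X) a
      else if a < b then \<i> * complex_of_real (diag_re X a - J1_re k X a)
      else \<i> * complex_of_real (diag_re X b + J1_re k X b)) else 0)"

lemma su_anti_antidiag_entries:
  assumes X: "X \<in> su_anti k" and j: "j < k"
  shows "X j (2*k - j) = \<i> * complex_of_real (anti_up k X j)"
    "X (2*k - j) j = \<i> * complex_of_real (anti_low k X j)"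
  using su_anti_entry[OF X, of j "2*k - j"] su_anti_entry[OF X, of "2*k - j" j] j
  unfolding anti_up_def anti_low_def by (simp_all add: complex_eq_iff)

lemma su_anti_mirror_diag:
  "X \<in> su_anti k \<Longrightarrow> j < k \<Longrightarrow> X (2*k - j) (2*k - j) = Complex (- diag_re X j) (diag_im X j)"
  using su_anti_entry[of X k "2*k - j" "2*k - j"] unfolding diag_re_def diag_im_def
  by (simp add: complex_eq_iff)

lemma rot_conj_block:
  assumes X: "X \<in> su_anti k" and j: "j < k"
  shows "rot_conj k X j j = Complex ((anti_up k X j - anti_low k X j) / 2) (diag_im X j)"
    "rot_conj k X (2*k - j) (2*k - j) = Complex (- (anti_up k X j - anti_low k X j) / 2) (diag_im X j)"
    "rot_conj k X j (2*k - j) = \<i> * complex_of_real ((anti_up k X j + anti_low k X j) / 2 - diag_re X j)"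
    "rot_conj k X (2*k - j) j = \<i> * complex_of_real ((anti_up k X j + anti_low k X j) / 2 + diag_re X j)"
  using j su_anti_antidiag_entries[OF X j] su_anti_mirror_diag[OF X j]
  by (auto simp: rot_conj_entry complex_eq_iff diag_re_def diag_im_def)

lemma rot_conj_coords:
  assumes Y: "Y \<in> su_anti k" and j: "j < k"
  shows "anti_skew k (rot_conj k Y) j = diag_re Y j"
    "anti_mean k (rot_conj k Y) j = (anti_up k Y j + anti_low k Y j) / 2"
    "diag_re (rot_conj k Y) j = (anti_up k Y j - anti_low k Y j) / 2"
    "diag_im (rot_conj k Y) j = diag_im Y j"
  using rot_conj_block[OF Y j] unfolding anti_up_def anti_low_def anti_mean_def anti_skew_def
    diag_re_def diag_im_def by auto

lemma J1_re_rot_conj: "Y \<in> su_anti k \<Longrightarrow> j < k \<Longrightarrow> J1_re k (rot_conj k Y) j = J1_re k Y j"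
  by (rule shear_cong) (simp_all add: rot_conj_coords)

lemma J2_im_rot_conj: "Y \<in> su_anti k \<Longrightarrow> j < k \<Longrightarrow> J2_im k (rot_conj k Y) j = J1_im k Y j"
  by (rule shear_cong) (simp_all add: rot_conj_coords)

lemma J1_model_coords:
  assumes j: "j < k"
  shows "anti_up k (J1_model k Y) j = anti_up k Y j" "anti_low k (J1_model k Y) j = - anti_low k Y j"
  using j unfolding anti_up_def anti_low_def J1_model_def by auto

lemma J2_model_rot_conj_row_upper:
  assumes a: "a < k" and ab: "a < b" and ba: "b < 2*k - a"
  shows "J2_model k (rot_conj k Y) a b = rot_conj k (J1_model k Y) a b"
proof -
  have "layer k a < layer k b" unfolding layer_def using a ab ba by auto
  moreover have "a < Suc (2*k)" "b < Suc (2*k)" "2*k - a < Suc (2*k)" "2*k - b < Suc (2*k)"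
    "2*k - (2*k - a) = a" "2*k - (2*k - b) = b" "a \<noteq> k" "2*k - a \<noteq> k" "a < 2*k - b"
    "2*k - b < 2*k - a"
    using a ab ba by auto
  ultimately show ?thesis
    unfolding J2_model_def using a ab ba
    by (cases "b = k"; simp add: rot_conj_entry J1_model_def;
        simp add: algebra_simps add_divide_distrib diff_divide_distrib)
qed

lemma J2_model_rot_conj_row_lower:
  assumes a: "k < a" "a \<le> 2*k" and ab: "2*k - a < b" and ba: "b < a"
  shows "J2_model k (rot_conj k Y) a b = rot_conj k (J1_model k Y) a b"
proof -
  have "layer k a < layer k b" unfolding layer_def using a ab ba by auto
  moreover have "a < Suc (2*k)" "b < Suc (2*k)" "2*k - a < Suc (2*k)" "2*k - b < Suc (2*k)"
    "2*k - (2*k - a) = a" "2*k - (2*k - b) = b" "a \<noteq> k" "2*k - a \<noteq> k" "2*k - a < 2*k - b"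
    "2*k - b < a" "\<not> a < k"
    using a ab ba by auto
  ultimately show ?thesis
    unfolding J2_model_def using a ab ba
    by (cases "b = k"; simp add: rot_conj_entry J1_model_def;
        simp add: algebra_simps add_divide_distrib diff_divide_distrib)
qed

lemma J2_model_rot_conj_col_left:
  assumes b: "b < k" and ab: "b < a" and ba: "a < 2*k - b"
  shows "J2_model k (rot_conj k Y) a b = rot_conj k (J1_model k Y) a b"
proof -
  have "layer k b < layer k a" "\<not> layer k a < layer k b" unfolding layer_def using b ab ba by auto
  moreover have "a < Suc (2*k)" "b < Suc (2*k)" "2*k - a < Suc (2*k)" "2*k - b < Suc (2*k)"
    "2*k - (2*k - a) = a" "2*k - (2*k - b) = b" "b \<noteq> k" "2*k - b \<noteq> k" "b < 2*k - a"
    "2*k - a < 2*k - b"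
    using b ab ba by auto
  ultimately show ?thesis
    unfolding J2_model_def using b ab ba
    by (cases "a = k"; simp add: rot_conj_entry J1_model_def;
        simp add: algebra_simps add_divide_distrib diff_divide_distrib)
qed

lemma J2_model_rot_conj_col_right:
  assumes b: "k < b" "b \<le> 2*k" and ab: "2*k - b < a" and ba: "a < b"
  shows "J2_model k (rot_conj k Y) a b = rot_conj k (J1_model k Y) a b"
proof -
  have "layer k b < layer k a" "\<not> layer k a < layer k b" unfolding layer_def using b ab ba by auto
  moreover have "a < Suc (2*k)" "b < Suc (2*k)" "2*k - a < Suc (2*k)" "2*k - b < Suc (2*k)"
    "2*k - (2*k - a) = a" "2*k - (2*k - b) = b" "b \<noteq> k" "2*k - b \<noteq> k" "2*k - b < 2*k - a"
    "2*k - a < b" "\<not> b < k"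
    using b ab ba by auto
  ultimately show ?thesis
    unfolding J2_model_def using b ab ba
    by (cases "a = k"; simp add: rot_conj_entry J1_model_def;
        simp add: algebra_simps add_divide_distrib diff_divide_distrib)
qed

lemma J2_model_rot_conj_antidiag:
  assumes Y: "Y \<in> su_anti k" and j: "j < k"
  shows "J2_model k (rot_conj k Y) j (2*k - j) = rot_conj k (J1_model k Y) j (2*k - j)"
    and "J2_model k (rot_conj k Y) (2*k - j) j = rot_conj k (J1_model k Y) (2*k - j) j"
proof -
  have l: "\<not> layer k j < layer k (2*k - j)" "\<not> layer k (2*k - j) < layer k j"
    and f: "j < Suc (2*k)" "2*k - j < Suc (2*k)" "j \<noteq> 2*k - j" "j < 2*k - j"
    using j unfolding layer_def by auto
  note Y' = J1_model_mem[OF Y]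
  have "J2_model k (rot_conj k Y) j (2*k - j)
      = \<i> * complex_of_real ((anti_up k Y j - anti_low k Y j) / 2 - J1_re k Y j)"
    unfolding J2_model_def using l f j by (simp add: rot_conj_coords[OF Y j] J1_re_rot_conj[OF Y j])
  also have "\<dots> = rot_conj k (J1_model k Y) j (2*k - j)"
    using rot_conj_block(3)[OF Y' j] J1_model_coords[OF j] diag_re_J1_model[OF j] by simp
  finally show "J2_model k (rot_conj k Y) j (2*k - j) = rot_conj k (J1_model k Y) j (2*k - j)" .
  have "J2_model k (rot_conj k Y) (2*k - j) j
      = \<i> * complex_of_real ((anti_up k Y j - anti_low k Y j) / 2 + J1_re k Y j)"
    unfolding J2_model_def using l f j by (simp add: rot_conj_coords[OF Y j] J1_re_rot_conj[OF Y j])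
  also have "\<dots> = rot_conj k (J1_model k Y) (2*k - j) j"
    using rot_conj_block(4)[OF Y' j] J1_model_coords[OF j] diag_re_J1_model[OF j] by simp
  finally show "J2_model k (rot_conj k Y) (2*k - j) j = rot_conj k (J1_model k Y) (2*k - j) j" .
qed

lemma J2_model_rot_conj_diag:
  assumes Y: "Y \<in> su_anti k" and a: "a < Suc (2*k)"
  shows "J2_model k (rot_conj k Y) a a = rot_conj k (J1_model k Y) a a"
proof -
  have "J2_model k (rot_conj k Y) a a = cartan k (anti_mean k (rot_conj k Y)) (J2_im k (rot_conj k Y)) a"
    unfolding J2_model_def using a by simp
  also have "\<dots> = cartan k (\<lambda>j. (anti_up k Y j + anti_low k Y j) / 2) (J1_im k Y) a"
    by (rule cartan_cong) (use a rot_conj_coords(2)[OF Y] J2_im_rot_conj[OF Y] in auto)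
  finally have L: "J2_model k (rot_conj k Y) a a = cartan k (\<lambda>j. (anti_up k Y j + anti_low k Y j) / 2) (J1_im k Y) a" .
  consider "a < k" | "a = k" | "k < a" by linarith
  then show ?thesis
  proof cases
    case 1
    then show ?thesis
      unfolding L using rot_conj_block(1)[OF J1_model_mem[OF Y] 1] J1_model_coords[OF 1] diag_im_J1_model[OF 1]
      by (simp add: cartan_def)
  next
    case 2
    then show ?thesis
      unfolding L using J1_model_diag[of k k Y] by (simp add: rot_conj_entry cartan_def)
  next
    case 3
    define j where "j = 2*k - a"
    have j: "j < k" and aj: "a = 2*k - j" unfolding j_def using a 3 by auto
    have "cartan k (\<lambda>j. (anti_up k Y j + anti_low k Y j) / 2) (J1_im k Y) a
        = Complex (- (anti_up k Y j + anti_low k Y j) / 2) (J1_im k Y j)"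
      unfolding cartan_def using 3 j_def by (simp add: field_simps)
    then show ?thesis
      using L rot_conj_block(2)[OF J1_model_mem[OF Y] j] J1_model_coords[OF j] diag_im_J1_model[OF j] aj
      by simp
  qed
qed

lemma J2_model_rot_conj:
  assumes Y: "Y \<in> su_anti k"
  shows "J2_model k (rot_conj k Y) = rot_conj k (J1_model k Y)"
proof (rule cmat_eqI)
  fix a b
  show "J2_model k (rot_conj k Y) a b = rot_conj k (J1_model k Y) a b"
  proof (cases "a < Suc (2*k) \<and> b < Suc (2*k)")
    case False
    then show ?thesis unfolding J2_model_def by (simp only: rot_conj_entry if_False)
  next
    case True
    then have "a \<le> 2*k" "b \<le> 2*k" by auto
    then show ?thesis
    proof (cases rule: mirror_regions)
      case row_upper then show ?thesis by (rule J2_model_rot_conj_row_upper)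
    next
      case row_lower then show ?thesis using \<open>a \<le> 2*k\<close> by (intro J2_model_rot_conj_row_lower)
    next
      case col_left then show ?thesis by (rule J2_model_rot_conj_col_left)
    next
      case col_right then show ?thesis using \<open>b \<le> 2*k\<close> by (intro J2_model_rot_conj_col_right)
    next
      case diag then show ?thesis using J2_model_rot_conj_diag[OF Y] True by simp
    next
      case anti_upper then show ?thesis using J2_model_rot_conj_antidiag(1)[OF Y] by simp
    next
      case anti_lower then show ?thesis using J2_model_rot_conj_antidiag(2)[OF Y] by simp
    qed
  qed
qed

lemma J2_model_eq_conj_endo:
  assumes X: "X \<in> su_anti k"
  shows "J2_model k X = conj_endo (Suc (2*k)) (rot k) (rot_inv k) (J1_model k) X"
proof -
  interpret lie_conjugation "Suc (2*k)" "su_anti k" "su_anti k" "rot k" "rot_inv k"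
    by (rule lie_conjugation_rot)
  show ?thesis
    unfolding conj_endo_def
    using J2_model_rot_conj[OF mconj_inv_mem[OF X]] mconj_inv[OF X] by simp
qed

lemma diag_coords_J2_model:
  assumes "j < k"
  shows "diag_re (J2_model k X) j = anti_mean k X j" "diag_im (J2_model k X) j = J2_im k X j"
  using assms unfolding diag_re_def diag_im_def J2_model_def by (auto simp: Re_cartan Im_cartan)

lemma J1_re_J2_model:
  assumes k: "0 < k" and j: "j < k"
  shows "J1_re k (J2_model k X) j = anti_skew k X j"
proof -
  have "J1_re k (J2_model k X) j = shear k (c_re k) (J2_im k X) j"
    by (rule shear_cong) (simp_all add: diag_coords_J2_model j)
  then show ?thesis using shear_inverse(1)[OF k] by simp
qed

lemma J1_im_J2_model: "j < k \<Longrightarrow> J1_im k (J2_model k X) j = shear k (c_im k) (anti_mean k X) j"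
  by (rule shear_cong) (simp_all add: diag_coords_J2_model)

lemma anti_coords_J1_model:
  assumes "j < k"
  shows "anti_mean k (J1_model k X) j = - anti_skew k X j" "anti_skew k (J1_model k X) j = - anti_mean k X j"
  using J1_model_coords[OF assms] unfolding anti_mean_def anti_skew_def by (simp_all add: field_simps)

lemma J2_im_J1_model:
  assumes j: "j < k"
  shows "J2_im k (J1_model k X) j = - J1_im k (J2_model k X) j"
proof -
  have "J2_im k (J1_model k X) j = shear k (c_im k) (\<lambda>l. - anti_mean k X l) j"
    by (rule shear_cong) (simp_all add: anti_coords_J1_model j)
  then show ?thesis
    by (simp add: shear_uminus J1_im_J2_model[OF j])
qed

lemma J1_J2_model_anticommute_row_upper:
  assumes a: "a < k" and ab: "a < b" and ba: "b < 2*k - a"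
  shows "J1_model k (J2_model k X) a b = - J2_model k (J1_model k X) a b"
proof -
  have "layer k a < layer k b" unfolding layer_def using a ab ba by auto
  moreover have "a < Suc (2*k)" "b < Suc (2*k)" "2*k - a < Suc (2*k)" "2*k - (2*k - a) = a"
    "\<not> 2*k - a < b" "2*k - a \<noteq> b" "a \<noteq> b"
    using a ab ba by auto
  ultimately show ?thesis unfolding J1_model_def J2_model_def using a ab ba by simp
qed

lemma J1_J2_model_anticommute_row_lower:
  assumes a: "k < a" "a \<le> 2*k" and ab: "2*k - a < b" and ba: "b < a"
  shows "J1_model k (J2_model k X) a b = - J2_model k (J1_model k X) a b"
proof -
  have "layer k a < layer k b" unfolding layer_def using a ab ba by auto
  moreover have "a < Suc (2*k)" "b < Suc (2*k)" "2*k - a < Suc (2*k)" "2*k - (2*k - a) = a"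
    "\<not> b < 2*k - a" "2*k - a \<noteq> b" "a \<noteq> b" "\<not> a < k" "\<not> a < b"
    using a ab ba by auto
  ultimately show ?thesis unfolding J1_model_def J2_model_def using a ab ba by simp
qed

lemma J1_J2_model_anticommute_col_left:
  assumes b: "b < k" and ab: "b < a" and ba: "a < 2*k - b"
  shows "J1_model k (J2_model k X) a b = - J2_model k (J1_model k X) a b"
proof -
  have "layer k b < layer k a" "\<not> layer k a < layer k b" unfolding layer_def using b ab ba by auto
  moreover have "a < Suc (2*k)" "b < Suc (2*k)" "2*k - b < Suc (2*k)" "2*k - (2*k - b) = b"
    "\<not> 2*k - b < a" "2*k - b \<noteq> a" "a \<noteq> b" "\<not> a < b"
    using b ab ba by auto
  ultimately show ?thesis unfolding J1_model_def J2_model_def using b ab ba by simp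
qed

lemma J1_J2_model_anticommute_col_right:
  assumes b: "k < b" "b \<le> 2*k" and ab: "2*k - b < a" and ba: "a < b"
  shows "J1_model k (J2_model k X) a b = - J2_model k (J1_model k X) a b"
proof -
  have "layer k b < layer k a" "\<not> layer k a < layer k b" unfolding layer_def using b ab ba by auto
  moreover have "a < Suc (2*k)" "b < Suc (2*k)" "2*k - b < Suc (2*k)" "2*k - (2*k - b) = b"
    "\<not> a < 2*k - b" "2*k - b \<noteq> a" "a \<noteq> b" "\<not> b < k" "\<not> b < a"
    using b ab ba by auto
  ultimately show ?thesis unfolding J1_model_def J2_model_def using b ab ba by simp
qed

lemma J1_J2_model_anticommute_antidiag:
  assumes k: "0 < k" and j: "j < k"
  shows "J1_model k (J2_model k X) j (2*k - j) = - J2_model k (J1_model k X) j (2*k - j)"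
    and "J1_model k (J2_model k X) (2*k - j) j = - J2_model k (J1_model k X) (2*k - j) j"
proof -
  have l: "\<not> layer k j < layer k (2*k - j)" "\<not> layer k (2*k - j) < layer k j"
    and f: "j < Suc (2*k)" "2*k - j < Suc (2*k)" "j \<noteq> 2*k - j" "2*k - j \<noteq> j" "j < 2*k - j" "\<not> 2*k - j < j"
    using j unfolding layer_def by auto
  have "J1_model k (J2_model k X) j (2*k - j) = \<i> * complex_of_real (diag_re X j - J1_re k X j)"
    unfolding J1_model_def using f by (simp add: J2_model_def l f)
  moreover have "J2_model k (J1_model k X) j (2*k - j) = \<i> * complex_of_real (J1_re k X j - diag_re X j)"
    unfolding J2_model_def using l f by (simp add: J1_re_J1_model[OF k j] diag_re_J1_model[OF j])
  ultimately show "J1_model k (J2_model k X) j (2*k - j) = - J2_model k (J1_model k X) j (2*k - j)"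
    by (metis minus_diff_eq of_real_diff mult_minus_right)
  have "J1_model k (J2_model k X) (2*k - j) j = - (\<i> * complex_of_real (diag_re X j + J1_re k X j))"
    unfolding J1_model_def using f by (simp add: J2_model_def l f)
  moreover have "J2_model k (J1_model k X) (2*k - j) j = \<i> * complex_of_real (diag_re X j + J1_re k X j)"
    unfolding J2_model_def using l f by (simp add: J1_re_J1_model[OF k j] diag_re_J1_model[OF j])
  ultimately show "J1_model k (J2_model k X) (2*k - j) j = - J2_model k (J1_model k X) (2*k - j) j"
    by simp
qed

lemma J1_J2_model_anticommute_diag:
  assumes k: "0 < k" and a: "a < Suc (2*k)"
  shows "J1_model k (J2_model k X) a a = - J2_model k (J1_model k X) a a"
proof -
  have "J1_model k (J2_model k X) a a = cartan k (J1_re k (J2_model k X)) (J1_im k (J2_model k X)) a"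
    using a by (rule J1_model_diag)
  also have "\<dots> = cartan k (anti_skew k X) (J1_im k (J2_model k X)) a"
    by (rule cartan_cong) (use a J1_re_J2_model[OF k] in auto)
  also have "\<dots> = - cartan k (\<lambda>j. - anti_skew k X j) (\<lambda>j. - J1_im k (J2_model k X) j) a"
    by (simp add: cartan_uminus)
  also have "\<dots> = - cartan k (anti_mean k (J1_model k X)) (J2_im k (J1_model k X)) a"
    by (rule arg_cong[where f = uminus], rule cartan_cong)
      (use a anti_coords_J1_model J2_im_J1_model in auto)
  also have "\<dots> = - J2_model k (J1_model k X) a a"
    unfolding J2_model_def using a by simp
  finally show ?thesis .
qed

lemma J1_J2_model_anticommute:
  assumes k: "0 < k"
  shows "J1_model k (J2_model k X) = - J2_model k (J1_model k X)"
proof (rule cmat_eqI)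
  fix a b
  show "J1_model k (J2_model k X) a b = (- J2_model k (J1_model k X)) a b"
  proof (cases "a < Suc (2*k) \<and> b < Suc (2*k)")
    case False
    then show ?thesis unfolding J1_model_def J2_model_def by auto
  next
    case True
    then have "a \<le> 2*k" "b \<le> 2*k" by auto
    then show ?thesis
    proof (cases rule: mirror_regions)
      case row_upper then show ?thesis using J1_J2_model_anticommute_row_upper by simp
    next
      case row_lower then show ?thesis using J1_J2_model_anticommute_row_lower \<open>a \<le> 2*k\<close> by simp
    next
      case col_left then show ?thesis using J1_J2_model_anticommute_col_left by simp
    next
      case col_right then show ?thesis using J1_J2_model_anticommute_col_right \<open>b \<le> 2*k\<close> by simp
    next
      case diag then show ?thesis using J1_J2_model_anticommute_diag[OF k] True by simp
    next
      case anti_upper then show ?thesis using J1_J2_model_anticommute_antidiag(1)[OF k] by simp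
    next
      case anti_lower then show ?thesis using J1_J2_model_anticommute_antidiag(2)[OF k] by simp
    qed
  qed
qed

section \<open>The hyper-paracomplex structure\<close>

context
  fixes k :: nat
  assumes k: "0 < k"
begin

interpretation R: lie_conjugation "Suc (2*k)" "su_anti k" "su_anti k" "rot k" "rot_inv k"
  by (rule lie_conjugation_rot)

lemma lin_endo_J2_model: "lin_endo (su_anti k) (J2_model k)"
  using R.L1.lin_endo_cong R.lin_endo_conj_endo[OF lin_endo_J1_model] J2_model_eq_conj_endo by blast

lemma J2_model_involutive: "X \<in> su_anti k \<Longrightarrow> J2_model k (J2_model k X) = X"
  using R.conj_endo_comp[OF lin_endo_J1_model] J1_model_involutive[OF R.mconj_inv_mem k] R.mconj_inv
    J2_model_eq_conj_endo R.L1.lin_endo_mem[OF lin_endo_J2_model] by simp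

lemma J2_model_anti_isometry:
  "X \<in> su_anti k \<Longrightarrow> Y \<in> su_anti k \<Longrightarrow>
    Bform (Suc (2*k)) (J2_model k X) (J2_model k Y) = - Bform (Suc (2*k)) X Y"
  using R.Bform_conj_endo[OF lin_endo_J1_model, of "-1"] J1_model_anti_isometry[OF _ _ k]
    J2_model_eq_conj_endo by simp

lemma J2_model_integrable:
  "X \<in> su_anti k \<Longrightarrow> Y \<in> su_anti k \<Longrightarrow> nijenhuis (Suc (2*k)) (J2_model k) X Y = 0"
  using R.L1.nijenhuis_cong[OF R.lin_endo_conj_endo[OF lin_endo_J1_model] J2_model_eq_conj_endo]
    R.nijenhuis_conj_endo[OF lin_endo_J1_model J1_model_integrable[OF k]] by simp

lemma hyper_paracomplex_model:
  "hyper_paracomplex (Suc (2*k)) (su_anti k) (J1_model k) (J2_model k) (\<lambda>X. J1_model k (J2_model k X))"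
proof -
  have anti: "J2_model k (J1_model k X) = - J1_model k (J2_model k X)" for X
    using J1_J2_model_anticommute[OF k] by (metis minus_minus)
  have J3: "J1_model k (J2_model k (J1_model k (J2_model k X))) = - X" if "X \<in> su_anti k" for X
    using that anti J1_model_involutive[OF _ k] J2_model_involutive R.L1.lin_endo_uminus[OF lin_endo_J1_model]
      J1_model_mem by simp
  have "nijenhuis (Suc (2*k)) (\<lambda>X. J1_model k (J2_model k X)) X Y = 0"
    if "X \<in> su_anti k" "Y \<in> su_anti k" for X Y
    by (rule R.L1.composite_integrable[OF lin_endo_J1_model lin_endo_J2_model])
      (use that anti J1_model_involutive[OF _ k] J2_model_involutive J1_model_integrable[OF k]
        J2_model_integrable in auto)
  then show ?thesis
    unfolding hyper_paracomplex_def almost_hyper_paracomplex_def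
    using lin_endo_J1_model lin_endo_J2_model R.L1.lin_endo_comp[OF lin_endo_J1_model lin_endo_J2_model]
      J1_model_involutive[OF _ k] J2_model_involutive J3 anti J1_model_integrable[OF k] J2_model_integrable
    by auto
qed

lemma hyperparahermitian_model:
  "hyperparahermitian (su_anti k) (Bform (Suc (2*k))) (J1_model k) (J2_model k) (\<lambda>X. J1_model k (J2_model k X))"
  unfolding hyperparahermitian_def
  using J1_model_anti_isometry[OF _ _ k] J2_model_anti_isometry
    lie_subalgebra.lin_endo_mem[OF lie_subalgebra_su_anti lin_endo_J2_model]
  by simp

lemma hyper_su_pq:
  "\<exists>J1 J2 J3. hyper_paracomplex (Suc (2*k)) (su_pq (Suc k) k) J1 J2 J3 \<and>
     hyperparahermitian (su_pq (Suc k) k) (Bform (Suc (2*k))) J1 J2 J3"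
  using lie_conjugation.hyper_paracomplex_conj_endo[OF lie_conjugation_ipq_to_antidiag hyper_paracomplex_model]
    lie_conjugation.hyperparahermitian_conj_endo[OF lie_conjugation_ipq_to_antidiag hyper_paracomplex_model
      hyperparahermitian_model]
  by blast

end

theorem mainTheorem3:
  fixes m :: nat
  assumes "1 < m"
  shows
    "(\<forall>X\<in>su_pq m (m - 1). \<forall>Y\<in>su_pq m (m - 1). Im (Bform (2*m - 1) X Y) = 0) \<and>
     (\<forall>X\<in>su_pq m (m - 1). (\<forall>Y\<in>su_pq m (m - 1). Bform (2*m - 1) X Y = 0) \<longrightarrow> X = 0) \<and>
     (\<forall>X\<in>su_pq m (m - 1). \<forall>Y\<in>su_pq m (m - 1). \<forall>Z\<in>su_pq m (m - 1).
        Bform (2*m - 1) (brk (2*m - 1) X Y) Z = - Bform (2*m - 1) Y (brk (2*m - 1) X Z)) \<and>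
     (\<exists>J1 J2 J3.
        hyper_paracomplex (2*m - 1) (su_pq m (m - 1)) J1 J2 J3 \<and>
        hyperparahermitian (su_pq m (m - 1)) (Bform (2*m - 1)) J1 J2 J3 \<and>
        HPKT_connection (2*m - 1) (su_pq m (m - 1)) (Bform (2*m - 1)) J1 J2 J3 (\<lambda>X Y. 0) \<and>
        flat_conn (2*m - 1) (su_pq m (m - 1)) (\<lambda>X Y. 0) \<and>
        (\<forall>X\<in>su_pq m (m - 1). \<forall>Y\<in>su_pq m (m - 1). \<forall>Z\<in>su_pq m (m - 1).
           torsion3 (2*m - 1) (Bform (2*m - 1)) (\<lambda>X Y. 0) X Y Z
             = - Bform (2*m - 1) (brk (2*m - 1) X Y) Z) \<and>
        (\<forall>X0\<in>su_pq m (m - 1). \<forall>X1\<in>su_pq m (m - 1). \<forall>X2\<in>su_pq m (m - 1). \<forall>X3\<in>su_pq m (m - 1).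
           d3 (2*m - 1) (torsion3 (2*m - 1) (Bform (2*m - 1)) (\<lambda>X Y. 0)) X0 X1 X2 X3 = 0))"
proof -
  obtain k where m: "m = Suc k" and k: "0 < k"
    using assms by (metis less_imp_Suc_add add_gr_0 zero_less_one)
  have n: "m + (m - 1) = 2*m - 1" "2*m - 1 = Suc (2*k)" "m - 1 = k"
    using m by simp_all
  interpret L: lie_subalgebra "2*m - 1" "su_pq m (m - 1)"
    using lie_subalgebra_su_pq[of m "m - 1"] unfolding n(1) .
  obtain J1 J2 J3 where hp: "hyper_paracomplex (2*m - 1) (su_pq m (m - 1)) J1 J2 J3"
    and hh: "hyperparahermitian (su_pq m (m - 1)) (Bform (2*m - 1)) J1 J2 J3"
    using hyper_su_pq[OF k] unfolding n(2,3) m by auto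
  have "HPKT_connection (2*m - 1) (su_pq m (m - 1)) (Bform (2*m - 1)) J1 J2 J3 (\<lambda>X Y. 0)"
    using hyper_paracomplex_lin_endo[OF hp] by (rule L.HPKT_connection_zero)
  then show ?thesis
    using hp hh Im_Bform_su_pq[of _ m "m - 1"] Bform_nondegenerate_su_pq[of _ m "m - 1"]
    unfolding n(1)
    by (auto simp: Bform_ad_invariant flat_conn_zero torsion3_zero_connection d3_torsion3_zero_connection)
qed

end
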